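(* Consider Projected Stochastic Gradient Descent (PSGD) as defined below, with $\alpha_t=a/(u+t)^\gamma$ for some $a,u>0$ and $\gamma\in[0,1]$, and assume Conditions (D1) and (D2). Then there exist positive constants $J,I,K,L$ such that the following hold. - For all $t\ge0$ and $z\ge0$: $$\mathbb P\Big(\min_{x^\star\in\mathcal X^\star}\|x_{t+1}-x^\star\|\ge z\Big)\le J e^{-I t^\gamma z}.$$ - For all $t\ge1$: $$\mathbb E\Big[\min_{x^\star\in\mathcal X^\star}\|x_{t+1}-x^\star\|\Big]\le \frac{K}{t^\gamma} \qquad\text{and}\qquad \mathbb E\Big[l(x_{t+1})-\min_{x\in\mathcal X}l(x)\Big]\le\frac{L}{t^\gamma}.$$
   Context: $\mathcal X\subseteq\mathbb R^d$ is a nonempty closed bounded convex set, and $\|\cdot\|$ is the Euclidean norm. $l:\mathcal X\to\mathbb R$ is Lipschitz continuous, and $\mathcal X^\star:=\arg\min_{x\in\mathcal X}l(x)$. $\Pi_{\mathcal X}(y):=\arg\min_{z\in\mathcal X}\|y-z\|$ is the Euclidean projection. $\nabla l:\mathcal X\to\mathbb R^d$ denotes a fixed map giving the gradient (or a chosen subgradient) of $l$. PSGD: on a probability space with filtration $(\mathcal F_t)_{t\ge0}$, $x_0\in\mathcal X$ is $\mathcal F_0$-measurable, and for $t\ge0$ $$y_{t+1}=x_t-\alpha_t c_t,\qquad x_{t+1}=\Pi_{\mathcal X}(y_{t+1}),$$ where $c_t$ is an $\mathcal F_{t+1}$-measurable random vector with $\mathbb E[c_t\mid\mathcal F_t]=\nabla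 l(x_t)$. Condition (D1): there is $\kappa>0$ such that for every $x\in\mathcal X$ and every $x^\star\in\mathcal X^\star$ with $\|x-x^\star\|=\min_{z\in\mathcal X^\star}\|x-z\|$, $$\nabla l(x)^\top(x-x^\star)\ge\kappa\|x-x^\star\|.$$ Condition (D2): there are $\lambda>0$ and $M<\infty$ such that $\mathbb E[e^{\lambda\|c_t\|}\mid\mathcal F_t]\le M$ almost surely for all $t\ge0$. *)

theory Defs
  imports "HOL-Analysis.Analysis" "HOL-Probability.Probability"
begin

definition is_filtration :: "'w measure \<Rightarrow> (nat \<Rightarrow> 'w measure) \<Rightarrow> bool" where
  "is_filtration M F \<longleftrightarrow> (\<forall>t. subalgebra M (F t)) \<and> (\<forall>s t. s \<le> t \<longrightarrow> sets (F s) \<subseteq> sets (F t))"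

definition cond_exp_eq ::
  "'w measure \<Rightarrow> 'w measure \<Rightarrow> ('w \<Rightarrow> 'a::euclidean_space) \<Rightarrow> ('w \<Rightarrow> 'a) \<Rightarrow> bool" where
  "cond_exp_eq M G c v \<longleftrightarrow> integrable M c \<and>
     (\<forall>b\<in>Basis. AE \<omega> in M. real_cond_exp M G (\<lambda>\<omega>. c \<omega> \<bullet> b) \<omega> = v \<omega> \<bullet> b)"

definition argmin_set :: "'a set \<Rightarrow> ('a \<Rightarrow> real) \<Rightarrow> 'a set" where
  "argmin_set X l = {x \<in> X. \<forall>y\<in>X. l x \<le> l y}"

text \<open>Real power t^gamma for t \<ge> 0 with the convention 0^0 = 1.\<close>
definition rpow :: "real \<Rightarrow> real \<Rightarrow> real" where
  "rpow t g = (if g = 0 then 1 else t powr g)"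

end

theory Submission
  imports Defs
begin

text \<open>
  Write \<open>d t\<close> for the distance of \<open>x t\<close> to the optimal set. With the convex potential
  \<open>h z = c0 * (exp (z / c0) - 1)\<close> consider the Lyapunov function \<open>V t = exp (\<theta> t * h (d t))\<close>,
  where \<open>\<theta> t\<close> grows like the inverse step size \<open>(u + t) powr \<gamma>\<close>. Expanding one projected step
  to second order around an \<open>F t\<close>-measurable near-projection onto the optimal set, condition (D1)
  applied to the conditional mean of \<open>c t\<close> yields a decrease proportional to \<open>\<theta> (t + 1) * \<alpha> t\<close>,
  which is bounded away from zero, while (D2) controls the quadratic noise terms. Hence
  \<open>E V (t + 1) \<le> \<rho> * E V t + C\<close> with \<open>\<rho> < 1\<close> once the step size is small, so \<open>E V t\<close> is uniformly bounded.
  As \<open>h z \<ge> z\<close>, this is an exponential moment bound for \<open>t powr \<gamma> * d (t + 1)\<close>; Markov's inequality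
  gives the tail bound, \<open>exp y \<ge> y\<close> the bound in mean, and the Lipschitz continuity of \<open>l\<close>
  the bound on the suboptimality.
\<close>

lemma exp_le_taylor2_max: "exp (t::real) \<le> 1 + t + t^2/2 * exp (max t 0)"
proof (cases "t < 0")
  case True
  have "\<exists>s. t < s \<and> s < 0 \<and> exp t = (\<Sum>m<2. exp 0 / fact m * t ^ m) + exp s / fact 2 * t ^ 2"
    by (rule Maclaurin_minus[where diff="\<lambda>_. exp"]) (use True in \<open>auto intro: DERIV_exp\<close>)
  then obtain s where s: "s < 0" "exp t = (\<Sum>m<2. exp 0 / fact m * t ^ m) + exp s / fact 2 * t ^ 2"
    by blast
  have "exp s / 2 * t^2 \<le> 1/2 * t^2" using s by (intro mult_right_mono) auto
  moreover have "(\<Sum>m<2. exp 0 / fact m * t ^ m) = 1 + t" by (simp add: numeral_2_eq_2)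
  ultimately show ?thesis using s True by (simp add: max_def)
next
  case False
  obtain s where s: "\<bar>s\<bar> \<le> \<bar>t\<bar>" "exp t = (\<Sum>m<2. t ^ m / fact m) + exp s / fact 2 * t ^ 2"
    using Maclaurin_exp_le[of t 2] by blast
  have "exp s / 2 * t^2 \<le> exp t / 2 * t^2" using s(1) False by (intro mult_right_mono) auto
  moreover have "(\<Sum>m<2. t ^ m / fact m) = 1 + t" by (simp add: numeral_2_eq_2)
  ultimately have "exp t \<le> 1 + t + exp t / 2 * t^2" using s(2) by simp
  thus ?thesis using False by (simp add: max_def mult.commute)
qed

lemma exp_le_taylor2_of_abs_le:
  fixes y b :: real
  assumes "\<bar>y\<bar> \<le> b"
  shows "exp y \<le> 1 + y + b^2/2 * exp b"
proof -
  have b: "0 \<le> b" using assms by linarith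
  have "y^2 \<le> b^2" using assms by (metis abs_le_square_iff abs_of_nonneg abs_ge_zero order_trans)
  moreover have "exp (max y 0) \<le> exp b" using assms b by simp
  ultimately have "y^2/2 * exp (max y 0) \<le> b^2/2 * exp b"
    by (intro mult_mono divide_right_mono) auto
  thus ?thesis using exp_le_taylor2_max[of y] by linarith
qed

lemma powr_add_one_le:
  fixes x g :: real assumes "0 \<le> x" "0 \<le> g" "g \<le> 1"
  shows "(x+1) powr g \<le> x powr g + 1"
proof -
  define t where "t = x/(x+1)"
  have t01: "0 \<le> t" "t \<le> 1" using assms by (auto simp: t_def)
  have 1: "1 - t = 1/(x+1)" using assms by (simp add: t_def field_simps)
  have "t powr 1 \<le> t powr g" by (rule powr_mono') (use assms t01 in auto)
  moreover have "(1-t) powr 1 \<le> (1-t) powr g" by (rule powr_mono') (use assms t01 in auto)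
  ultimately have "1 \<le> t powr g + (1-t) powr g" using t01 by simp
  hence "(x+1) powr g * 1 \<le> (x+1) powr g * (t powr g + (1-t) powr g)"
    by (intro mult_left_mono) auto
  also have "\<dots> = ((x+1)*t) powr g + ((x+1)*(1-t)) powr g"
    using assms t01 by (simp add: distrib_left powr_mult)
  also have "(x+1)*t = x" using assms by (simp add: t_def)
  also have "(x+1)*(1-t) = 1" using assms 1 by simp
  finally show ?thesis by simp
qed

lemma norm_diff_le_quadratic:
  fixes v w :: "'a::real_inner"
  assumes "v \<noteq> 0"
  shows "norm (v - w) \<le> norm v - (v \<bullet> w)/norm v + (norm w)^2/(2*norm v)"
proof -
  define r where "r = norm v"
  have r: "r > 0" using assms by (simp add: r_def)
  define A where "A = (v \<bullet> w)/r"
  define Bq where "Bq = (norm w)^2/(2*r)"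
  have cs: "\<bar>v \<bullet> w\<bar> \<le> r * norm w" using Cauchy_Schwarz_ineq2[of v w] by (simp add: r_def)
  have nn: "0 \<le> r - A + Bq"
  proof -
    have "A \<le> norm w" using cs r by (simp add: A_def divide_le_eq mult.commute abs_le_iff)
    have "r - norm w + Bq = (r - norm w)^2/(2*r) + r/2" using r
      by (simp add: Bq_def field_simps power2_eq_square)
    moreover have "(r - norm w)^2/(2*r) \<ge> 0" using r by simp
    ultimately show ?thesis using \<open>A \<le> norm w\<close> r by linarith
  qed
  have "(norm (v - w))^2 = r^2 - 2*(v \<bullet> w) + (norm w)^2"
    by (simp add: r_def power2_norm_eq_inner inner_diff inner_commute algebra_simps)
  also have "\<dots> = r^2 - 2*r*A + 2*r*Bq" using r by (simp add: A_def Bq_def field_simps)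
  also have "\<dots> \<le> (r - A + Bq)^2"
  proof -
    have "(r - A + Bq)^2 = r^2 - 2*r*A + 2*r*Bq + (A-Bq)^2" by (simp add: power2_eq_square algebra_simps)
    thus ?thesis using zero_le_power2[of "A-Bq"] by linarith
  qed
  finally have "(norm (v - w))^2 \<le> (r - A + Bq)^2" .
  hence "norm (v - w) \<le> r - A + Bq" using nn by (simp add: power2_le_iff_abs_le)
  thus ?thesis by (simp add: r_def A_def Bq_def)
qed

lemma sq_mult_exp_le:
  fixes lam n \<mu> :: real
  assumes "0 < lam" "0 \<le> n" "0 \<le> \<mu>" "\<mu> \<le> lam / 2"
  shows "n^2 * exp (\<mu> * n) \<le> 8 / lam^2 * exp (lam * n)"
proof -
  have x: "0 \<le> lam*n/2" using assms by simp
  have "1 + lam*n/2 + (lam*n/2)^2/2 \<le> exp (lam*n/2)" using exp_lower_Taylor_quadratic[OF x] .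
  hence "(lam * n / 2)^2 / 2 \<le> exp (lam * n / 2)" using x by linarith
  hence "n^2 \<le> 8 / lam^2 * exp (lam * n / 2)" using assms by (simp add: field_simps power2_eq_square)
  moreover have "exp (\<mu> * n) \<le> exp (lam * n / 2)"
    using mult_right_mono[of \<mu> "lam / 2" n] assms by simp
  ultimately have "n^2 * exp (\<mu> * n) \<le> 8 / lam^2 * exp (lam * n / 2) * exp (lam * n / 2)"
    by (intro mult_mono) auto
  also have "\<dots> = 8 / lam^2 * exp (lam * n)" by (simp add: mult.assoc flip: exp_add)
  finally show ?thesis .
qed

section \<open>The exponential potential along one projected step\<close>

definition exp_potential :: "real \<Rightarrow> real \<Rightarrow> real" where
  "exp_potential c z = c * (exp (z / c) - 1)"

lemma exp_potential_mono: "c > 0 \<Longrightarrow> z \<le> z' \<Longrightarrow> exp_potential c z \<le> exp_potential c z'"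
  by (simp add: exp_potential_def divide_right_mono)

lemma exp_potential_ge: "c > 0 \<Longrightarrow> 0 \<le> z \<Longrightarrow> z \<le> exp_potential c z"
  using exp_ge_add_one_self[of "z / c"] mult_left_mono[of "1 + z / c" "exp (z / c)" c]
  by (simp add: exp_potential_def algebra_simps)

lemma exp_potential_le_exp: "c > 0 \<Longrightarrow> exp_potential c z \<le> c * exp (z / c)"
  by (simp add: exp_potential_def algebra_simps)

lemma exp_potential_le_linear:
  assumes c: "c > 0" and z: "0 \<le> z" "z \<le> D"
  shows "exp_potential c z \<le> exp (D / c) * z"
proof -
  have "1 - z / c \<le> exp (- (z / c))" using exp_ge_add_one_self[of "- (z / c)"] by simp
  hence "(1 - z / c) * exp (z / c) \<le> exp (- (z / c)) * exp (z / c)" by (intro mult_right_mono) auto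
  hence "exp (z / c) - 1 \<le> (z / c) * exp (z / c)" by (simp add: exp_minus field_simps)
  hence "c * (exp (z / c) - 1) \<le> c * ((z / c) * exp (z / c))" using c by (intro mult_left_mono) auto
  also have "\<dots> = z * exp (z / c)" using c by simp
  also have "\<dots> \<le> z * exp (D / c)" using z c by (intro mult_left_mono) (auto simp: divide_right_mono)
  finally show ?thesis by (simp add: exp_potential_def mult.commute)
qed

lemma exp_potential_increment:
  assumes c: "c > 0" and d: "0 \<le> d" "d \<le> D" and d': "0 \<le> d'" "d' \<le> D"
  shows "exp_potential c d' \<le> exp_potential c d + exp (d / c) * (d' - d) + exp (D / c) * (d' - d)^2 / (2 * c)"
proof -
  define \<Delta> where "\<Delta> = d' - d"
  have "exp (d / c) * exp (max (\<Delta> / c) 0) = exp (max d d' / c)"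
    using c by (simp add: \<Delta>_def mult_exp_exp max_def field_simps)
  also have "\<dots> \<le> exp (D / c)" using d d' c by (simp add: divide_right_mono)
  finally have curv: "exp (d / c) * exp (max (\<Delta> / c) 0) \<le> exp (D / c)" .
  have "exp (d' / c) = exp (d / c) * exp (\<Delta> / c)"
    using c by (simp add: \<Delta>_def diff_divide_distrib flip: exp_add)
  also have "\<dots> \<le> exp (d / c) * (1 + \<Delta> / c + (\<Delta> / c)^2 / 2 * exp (max (\<Delta> / c) 0))"
    by (intro mult_left_mono exp_le_taylor2_max) simp
  also have "\<dots> = exp (d / c) + exp (d / c) * \<Delta> / c + (\<Delta> / c)^2 / 2 * (exp (d / c) * exp (max (\<Delta> / c) 0))"
    by (simp add: algebra_simps)
  also have "\<dots> \<le> exp (d / c) + exp (d / c) * \<Delta> / c + (\<Delta> / c)^2 / 2 * exp (D / c)"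
    using curv by (intro add_left_mono mult_left_mono) auto
  finally have "c * exp (d' / c) \<le> c * (exp (d / c) + exp (d / c) * \<Delta> / c + (\<Delta> / c)^2 / 2 * exp (D / c))"
    using c by simp
  also have "\<dots> = c * exp (d / c) + exp (d / c) * \<Delta> + exp (D / c) * \<Delta>^2 / (2 * c)"
    using c by (simp add: field_simps power2_eq_square)
  finally show ?thesis by (simp add: exp_potential_def \<Delta>_def right_diff_distrib)
qed

text \<open>Here \<open>q\<close> is a near-projection of \<open>y\<close> onto a set and \<open>d\<close>, \<open>d'\<close> are the distances of \<open>y\<close> and of
  the step \<open>y - \<alpha> v\<close> to it. Away from the set, the quadratic expansion of \<open>norm (y - q - \<alpha> v)\<close> gives the
  first bound; the second is the Lipschitz bound.\<close>
lemma dist_increment_le: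
  fixes y q v :: "'a::real_inner" and d d' \<alpha> \<delta> r :: real
  assumes \<alpha>: "\<alpha> > 0" and r: "r > 0" and \<delta>: "0 \<le> \<delta>"
    and d': "d' \<le> norm (y - \<alpha> *\<^sub>R v - q)" and d_le: "d \<le> norm (y - q)"
    and near: "norm (y - q) < d + \<alpha> * \<delta>" and far: "\<alpha> * r \<le> d"
    and lip: "\<bar>d' - d\<bar> \<le> \<alpha> * norm v"
  shows "d' - d \<le> \<alpha> * \<delta> + \<alpha> * min (- (sgn (y - q) \<bullet> v) + (norm v)^2 / (2 * r)) (norm v)"
proof -
  define \<rho> where "\<rho> = norm (y - q)"
  have \<rho>: "\<rho> > 0" using \<alpha> r far d_le mult_pos_pos[OF \<alpha> r] unfolding \<rho>_def by linarith
  hence yq: "y - q \<noteq> 0" by (auto simp: \<rho>_def)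
  have "norm ((y - q) - \<alpha> *\<^sub>R v) \<le> \<rho> - ((y - q) \<bullet> (\<alpha> *\<^sub>R v)) / \<rho> + (norm (\<alpha> *\<^sub>R v))^2 / (2 * \<rho>)"
    using norm_diff_le_quadratic[OF yq, of "\<alpha> *\<^sub>R v"] by (simp add: \<rho>_def)
  moreover have "((y - q) \<bullet> (\<alpha> *\<^sub>R v)) / \<rho> = \<alpha> * (sgn (y - q) \<bullet> v)"
    using \<rho> by (simp add: sgn_div_norm \<rho>_def divide_inverse ac_simps)
  moreover have "(norm (\<alpha> *\<^sub>R v))^2 / (2 * \<rho>) \<le> \<alpha> * (norm v)^2 / (2 * r)"
  proof -
    have "(norm (\<alpha> *\<^sub>R v))^2 = \<alpha>^2 * (norm v)^2" using \<alpha> by (simp add: power_mult_distrib)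
    moreover have "\<alpha>^2 * (norm v)^2 / (2 * \<rho>) \<le> \<alpha>^2 * (norm v)^2 / (2 * (\<alpha> * r))"
      using \<rho> \<alpha> r far d_le by (intro divide_left_mono mult_pos_pos) (auto simp: \<rho>_def)
    moreover have "\<alpha>^2 * (norm v)^2 / (2 * (\<alpha> * r)) = \<alpha> * (norm v)^2 / (2 * r)"
      using \<alpha> by (simp add: power2_eq_square)
    ultimately show ?thesis by simp
  qed
  moreover have "y - \<alpha> *\<^sub>R v - q = (y - q) - \<alpha> *\<^sub>R v" by (simp add: algebra_simps)
  ultimately have "d' - d \<le> \<alpha> * \<delta> + \<alpha> * (- (sgn (y - q) \<bullet> v) + (norm v)^2 / (2 * r))"
    using d' near by (simp add: \<rho>_def algebra_simps)
  moreover have "d' - d \<le> \<alpha> * \<delta> + \<alpha> * norm v" using lip \<alpha> \<delta> by (smt (verit) mult_nonneg_nonneg)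
  ultimately show ?thesis by (simp add: min_def distrib_left)
qed

lemma exp_drift_le:
  fixes \<beta> h E m g n \<alpha> D c A :: real
  assumes \<beta>: "\<beta> > 0" and h: "0 < h" "h \<le> E" and n: "0 \<le> n" and m: "\<bar>m\<bar> \<le> n" "m \<le> g"
    and \<alpha>: "\<alpha> > 0" and D: "0 \<le> D" and c: "c > 0" and A: "A = E + E * D / (2 * c)"
  shows "exp (\<beta> * h * m + \<beta> * E / (2 * c) * min (\<alpha> * n^2) (D * n))
    \<le> 1 + \<beta> * h * g + \<beta> * E * \<alpha> / (2 * c) * n^2 + \<beta>^2 * A^2 / 2 * n^2 * exp (\<beta> * A * n)"
proof -
  define Y where "Y = \<beta> * h * m + \<beta> * E / (2 * c) * min (\<alpha> * n^2) (D * n)"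
  have coeff: "0 \<le> \<beta> * E / (2 * c)" using \<beta> h c by simp
  have "\<bar>Y\<bar> \<le> \<bar>\<beta> * h * m\<bar> + \<bar>\<beta> * E / (2 * c) * min (\<alpha> * n^2) (D * n)\<bar>"
    unfolding Y_def by (rule abs_triangle_ineq)
  moreover have "\<bar>\<beta> * h * m\<bar> \<le> \<beta> * E * n"
    using m h n \<beta> by (simp add: abs_mult mult.assoc mult_left_mono mult_mono)
  moreover have "\<bar>\<beta> * E / (2 * c) * min (\<alpha> * n^2) (D * n)\<bar> \<le> \<beta> * E / (2 * c) * (D * n)"
  proof -
    have "\<bar>min (\<alpha> * n^2) (D * n)\<bar> \<le> D * n" using \<alpha> n D by auto
    thus ?thesis using coeff by (simp only: abs_mult abs_of_nonneg[OF coeff]) (rule mult_left_mono)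
  qed
  ultimately have "\<bar>Y\<bar> \<le> \<beta> * E * n + \<beta> * E / (2 * c) * (D * n)" by linarith
  hence Y_abs: "\<bar>Y\<bar> \<le> \<beta> * A * n" by (simp add: A algebra_simps)
  have "\<beta> * h * m \<le> \<beta> * h * g" using \<beta> h m by (intro mult_left_mono) auto
  moreover have "\<beta> * E / (2 * c) * min (\<alpha> * n^2) (D * n) \<le> \<beta> * E / (2 * c) * (\<alpha> * n^2)"
    using coeff by (intro mult_left_mono) auto
  ultimately have "Y \<le> \<beta> * h * g + \<beta> * E * \<alpha> / (2 * c) * n^2" by (simp add: Y_def)
  thus ?thesis using exp_le_taylor2_of_abs_le[OF Y_abs] by (simp add: Y_def power_mult_distrib)
qed

lemma exp_potential_step:
  fixes y q v :: "'a::real_inner" and d d' \<alpha> \<theta> c D \<delta> r E A :: real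
  assumes \<alpha>: "\<alpha> > 0" and \<theta>: "\<theta> > 0" and c: "c > 0" and r: "r > 0" and \<delta>: "0 \<le> \<delta>"
    and d'_le: "d' \<le> norm (y - \<alpha> *\<^sub>R v - q)" and d_le: "d \<le> norm (y - q)"
    and near: "norm (y - q) < d + \<alpha> * \<delta>" and far: "\<alpha> * r \<le> d"
    and d': "0 \<le> d'" "d' \<le> D" and d: "0 \<le> d" "d \<le> D"
    and lip: "\<bar>d' - d\<bar> \<le> \<alpha> * norm v"
    and E: "E = exp (D / c)" and A: "A = E + E * D / (2 * c)"
  shows "exp (\<theta> * exp_potential c d') \<le> exp (\<theta> * exp_potential c d + \<theta> * \<alpha> * exp (d / c) * \<delta>) *
    (1 - \<theta> * \<alpha> * exp (d / c) * (sgn (y - q) \<bullet> v) + \<theta> * \<alpha> * exp (d / c) / (2 * r) * (norm v)^2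
       + \<theta> * \<alpha> * E * \<alpha> / (2 * c) * (norm v)^2
       + (\<theta> * \<alpha>)^2 * A^2 / 2 * (norm v)^2 * exp (\<theta> * \<alpha> * A * norm v))"
proof -
  define \<beta> n h \<Delta> where "\<beta> = \<theta> * \<alpha>" and "n = norm v" and "h = exp (d / c)" and "\<Delta> = d' - d"
  define g where "g = - (sgn (y - q) \<bullet> v) + n^2 / (2 * r)"
  define m where "m = min g n"
  have h: "0 < h" "h \<le> E" using d c by (auto simp: h_def E divide_right_mono)
  have "\<bar>sgn (y - q) \<bullet> v\<bar> \<le> n"
    using Cauchy_Schwarz_ineq2[of "sgn (y - q)" v] by (cases "y = q") (simp_all add: n_def norm_sgn)
  moreover have "0 \<le> n^2 / (2 * r)" using r by simp
  ultimately have m: "\<bar>m\<bar> \<le> n" "m \<le> g" by (auto simp: m_def g_def min_def abs_le_iff)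
  have \<Delta>_le: "\<Delta> \<le> \<alpha> * (\<delta> + m)"
    using dist_increment_le[OF \<alpha> r \<delta> d'_le d_le near far lip] by (simp add: \<Delta>_def m_def g_def n_def distrib_left)
  have \<Delta>_sq: "\<Delta>^2 \<le> \<alpha> * min (\<alpha> * n^2) (D * n)"
  proof -
    have abs\<Delta>: "\<bar>\<Delta>\<bar> \<le> \<alpha> * n" "\<bar>\<Delta>\<bar> \<le> D" using lip d d' by (auto simp: \<Delta>_def n_def abs_le_iff)
    have "\<bar>\<Delta>\<bar> * \<bar>\<Delta>\<bar> \<le> (\<alpha> * n) * (\<alpha> * n)" using abs\<Delta> by (intro mult_mono) auto
    moreover have "\<bar>\<Delta>\<bar> * \<bar>\<Delta>\<bar> \<le> D * (\<alpha> * n)" using abs\<Delta> by (intro mult_mono) auto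
    ultimately show ?thesis by (simp add: power2_eq_square min_def algebra_simps)
  qed
  define Y where "Y = \<beta> * h * m + \<beta> * E / (2 * c) * min (\<alpha> * n^2) (D * n)"
  have "\<theta> * exp_potential c d' \<le> \<theta> * (exp_potential c d + h * \<Delta> + E * \<Delta>^2 / (2 * c))"
    using exp_potential_increment[OF c d d'] \<theta> by (intro mult_left_mono) (auto simp: E h_def \<Delta>_def)
  moreover have "\<theta> * (h * \<Delta>) \<le> \<theta> * (h * (\<alpha> * (\<delta> + m)))"
    using \<Delta>_le \<theta> h by (intro mult_left_mono) auto
  moreover have "\<theta> * (E * \<Delta>^2 / (2 * c)) \<le> \<theta> * (E * (\<alpha> * min (\<alpha> * n^2) (D * n)) / (2 * c))"
    using \<Delta>_sq \<theta> h c by (intro mult_left_mono divide_right_mono) auto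
  ultimately have "\<theta> * exp_potential c d' \<le> \<theta> * exp_potential c d + \<beta> * h * \<delta> + Y"
    by (simp add: Y_def \<beta>_def algebra_simps)
  hence "exp (\<theta> * exp_potential c d') \<le> exp (\<theta> * exp_potential c d + \<beta> * h * \<delta>) * exp Y"
    by (simp flip: exp_add)
  also have "\<dots> \<le> exp (\<theta> * exp_potential c d + \<beta> * h * \<delta>) *
     (1 + \<beta> * h * g + \<beta> * E * \<alpha> / (2 * c) * n^2 + \<beta>^2 * A^2 / 2 * n^2 * exp (\<beta> * A * n))"
    unfolding Y_def using \<alpha> \<theta> h m d c A
    by (intro mult_left_mono exp_drift_le) (auto simp: \<beta>_def n_def)
  finally show ?thesis by (simp add: \<beta>_def h_def n_def g_def algebra_simps)
qed

section \<open>Conditional expectations\<close>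

definition vec_cond_exp :: "'w measure \<Rightarrow> 'w measure \<Rightarrow> ('w \<Rightarrow> 'a::euclidean_space) \<Rightarrow> 'w \<Rightarrow> 'a" where
  "vec_cond_exp M F c \<omega> = (\<Sum>b\<in>Basis. real_cond_exp M F (\<lambda>\<omega>. c \<omega> \<bullet> b) \<omega> *\<^sub>R b)"

lemma borel_measurable_vec_cond_exp [measurable]: "vec_cond_exp M F c \<in> borel_measurable F"
  unfolding vec_cond_exp_def by measurable

lemma inner_vec_cond_exp:
  "b \<in> Basis \<Longrightarrow> vec_cond_exp M F c \<omega> \<bullet> b = real_cond_exp M F (\<lambda>\<omega>. c \<omega> \<bullet> b) \<omega>"
  by (simp add: vec_cond_exp_def inner_sum_left inner_Basis if_distrib cong: if_cong)

lemma AE_vec_cond_exp_eq: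
  assumes "cond_exp_eq M F c v"
  shows "AE \<omega> in M. vec_cond_exp M F c \<omega> = v \<omega>"
proof -
  have "AE \<omega> in M. \<forall>b\<in>Basis. real_cond_exp M F (\<lambda>\<omega>. c \<omega> \<bullet> b) \<omega> = v \<omega> \<bullet> b"
    using assms by (simp add: cond_exp_eq_def AE_finite_all)
  thus ?thesis by eventually_elim (simp add: vec_cond_exp_def euclidean_representation)
qed

lemma (in sigma_finite_subalgebra) integral_bounded_mult_real_cond_exp:
  assumes g: "integrable M g" and f: "f \<in> borel_measurable F"
    and f_bound: "\<And>\<omega>. \<omega> \<in> space M \<Longrightarrow> \<bar>f \<omega>\<bar> \<le> C"
  shows "integrable M (\<lambda>\<omega>. f \<omega> * g \<omega>)"
    and "(\<integral>\<omega>. f \<omega> * real_cond_exp M F g \<omega> \<partial>M) = (\<integral>\<omega>. f \<omega> * g \<omega> \<partial>M)"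
proof -
  have [measurable]: "f \<in> borel_measurable M" using f by (rule measurable_from_subalg[OF subalg])
  show int: "integrable M (\<lambda>\<omega>. f \<omega> * g \<omega>)"
  proof (rule Bochner_Integration.integrable_bound)
    show "integrable M (\<lambda>\<omega>. C * g \<omega>)" using g by simp
    show "AE \<omega> in M. norm (f \<omega> * g \<omega>) \<le> norm (C * g \<omega>)"
    proof (rule AE_I2)
      fix \<omega> assume "\<omega> \<in> space M"
      hence "\<bar>f \<omega>\<bar> \<le> \<bar>C\<bar>" using f_bound by fastforce
      thus "norm (f \<omega> * g \<omega>) \<le> norm (C * g \<omega>)" by (simp add: abs_mult mult_right_mono)
    qed
  qed (use g in measurable)
  show "(\<integral>\<omega>. f \<omega> * real_cond_exp M F g \<omega> \<partial>M) = (\<integral>\<omega>. f \<omega> * g \<omega> \<partial>M)"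
    using real_cond_exp_intg(2)[OF int f] g by (simp add: borel_measurable_integrable)
qed

lemma (in sigma_finite_subalgebra) integral_mult_inner_vec_cond_exp:
  fixes c v :: "'a \<Rightarrow> 'b::euclidean_space"
  assumes c: "integrable M c"
    and f: "f \<in> borel_measurable F" and f_bound: "\<And>\<omega>. \<omega> \<in> space M \<Longrightarrow> \<bar>f \<omega>\<bar> \<le> Cf"
    and v: "v \<in> borel_measurable F" and v_bound: "\<And>\<omega>. \<omega> \<in> space M \<Longrightarrow> norm (v \<omega>) \<le> Cv"
  shows "integrable M (\<lambda>\<omega>. f \<omega> * (v \<omega> \<bullet> c \<omega>))"
    and "integrable M (\<lambda>\<omega>. f \<omega> * (v \<omega> \<bullet> vec_cond_exp M F c \<omega>))"
    and "(\<integral>\<omega>. f \<omega> * (v \<omega> \<bullet> c \<omega>) \<partial>M) = (\<integral>\<omega>. f \<omega> * (v \<omega> \<bullet> vec_cond_exp M F c \<omega>) \<partial>M)"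
proof -
  have fvb_meas: "(\<lambda>\<omega>. f \<omega> * (v \<omega> \<bullet> b)) \<in> borel_measurable F" for b using f v by measurable
  have fvb_bound: "\<bar>f \<omega> * (v \<omega> \<bullet> b)\<bar> \<le> \<bar>Cf\<bar> * Cv" if "b \<in> Basis" "\<omega> \<in> space M" for b \<omega>
  proof -
    have "\<bar>v \<omega> \<bullet> b\<bar> \<le> Cv" using v_bound[OF that(2)] Basis_le_norm[OF that(1), of "v \<omega>"]
      by (simp add: inner_commute)
    moreover have "\<bar>f \<omega>\<bar> \<le> \<bar>Cf\<bar>" using f_bound[OF that(2)] by simp
    ultimately show ?thesis by (simp add: abs_mult mult_mono)
  qed
  have cb: "integrable M (\<lambda>\<omega>. c \<omega> \<bullet> b)" for b using c by (rule integrable_inner_left)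
  have split_c: "f \<omega> * (v \<omega> \<bullet> w \<omega>) = (\<Sum>b\<in>Basis. f \<omega> * (v \<omega> \<bullet> b) * (w \<omega> \<bullet> b))"
    for \<omega> and w :: "'a \<Rightarrow> 'b"
    by (simp add: euclidean_inner[of "v \<omega>" "w \<omega>"] sum_distrib_left mult.assoc)
  note basis_step = integral_bounded_mult_real_cond_exp[OF cb fvb_meas fvb_bound]
  have int_c: "integrable M (\<lambda>\<omega>. f \<omega> * (v \<omega> \<bullet> b) * (c \<omega> \<bullet> b))" if "b \<in> Basis" for b
    using basis_step(1)[OF that] .
  have int_G: "integrable M (\<lambda>\<omega>. f \<omega> * (v \<omega> \<bullet> b) * (vec_cond_exp M F c \<omega> \<bullet> b))" if "b \<in> Basis" for b
    using real_cond_exp_intg(1)[OF int_c[OF that] fvb_meas] c that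
    by (simp add: inner_vec_cond_exp borel_measurable_integrable)
  show "integrable M (\<lambda>\<omega>. f \<omega> * (v \<omega> \<bullet> c \<omega>))"
    unfolding split_c[where w = c] by (intro Bochner_Integration.integrable_sum int_c)
  show "integrable M (\<lambda>\<omega>. f \<omega> * (v \<omega> \<bullet> vec_cond_exp M F c \<omega>))"
    unfolding split_c[where w = "vec_cond_exp M F c"] by (intro Bochner_Integration.integrable_sum int_G)
  have "(\<integral>\<omega>. f \<omega> * (v \<omega> \<bullet> c \<omega>) \<partial>M) = (\<Sum>b\<in>Basis. \<integral>\<omega>. f \<omega> * (v \<omega> \<bullet> b) * (c \<omega> \<bullet> b) \<partial>M)"
    unfolding split_c[where w = c] by (intro Bochner_Integration.integral_sum int_c)
  also have "\<dots> = (\<Sum>b\<in>Basis. \<integral>\<omega>. f \<omega> * (v \<omega> \<bullet> b) * (vec_cond_exp M F c \<omega> \<bullet> b) \<partial>M)"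
  proof (rule sum.cong[OF refl])
    fix b :: 'b assume b: "b \<in> Basis"
    show "(\<integral>\<omega>. f \<omega> * (v \<omega> \<bullet> b) * (c \<omega> \<bullet> b) \<partial>M)
        = (\<integral>\<omega>. f \<omega> * (v \<omega> \<bullet> b) * (vec_cond_exp M F c \<omega> \<bullet> b) \<partial>M)"
      using basis_step(2)[OF b] b by (simp add: inner_vec_cond_exp)
  qed
  also have "\<dots> = (\<integral>\<omega>. f \<omega> * (v \<omega> \<bullet> vec_cond_exp M F c \<omega>) \<partial>M)"
    unfolding split_c[where w = "vec_cond_exp M F c"] by (intro Bochner_Integration.integral_sum[symmetric] int_G)
  finally show "(\<integral>\<omega>. f \<omega> * (v \<omega> \<bullet> c \<omega>) \<partial>M) = (\<integral>\<omega>. f \<omega> * (v \<omega> \<bullet> vec_cond_exp M F c \<omega>) \<partial>M)" .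
qed

lemma (in sigma_finite_subalgebra) nn_integral_mult_le_of_nn_cond_exp_le:
  assumes f: "f \<in> borel_measurable F" and g: "g \<in> borel_measurable M"
    and g_cond: "AE \<omega> in M. nn_cond_exp M F g \<omega> \<le> B"
  shows "(\<integral>\<^sup>+\<omega>. f \<omega> * g \<omega> \<partial>M) \<le> B * (\<integral>\<^sup>+\<omega>. f \<omega> \<partial>M)"
proof -
  have "(\<integral>\<^sup>+\<omega>. f \<omega> * g \<omega> \<partial>M) = (\<integral>\<^sup>+\<omega>. f \<omega> * nn_cond_exp M F g \<omega> \<partial>M)"
    by (rule nn_cond_exp_intg[OF f g, symmetric])
  also have "\<dots> \<le> (\<integral>\<^sup>+\<omega>. f \<omega> * B \<partial>M)"
    using g_cond by (intro nn_integral_mono_AE) (auto elim!: eventually_mono intro: mult_left_mono)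
  also have "\<dots> = B * (\<integral>\<^sup>+\<omega>. f \<omega> \<partial>M)"
    using measurable_from_subalg[OF subalg f] by (subst nn_integral_multc) (auto simp: mult.commute)
  finally show ?thesis .
qed

lemma (in sigma_finite_subalgebra) integral_mult_le_of_nn_cond_exp_le:
  assumes f: "f \<in> borel_measurable F" "integrable M f" "\<And>\<omega>. \<omega> \<in> space M \<Longrightarrow> 0 \<le> f \<omega>"
    and g: "g \<in> borel_measurable M" "\<And>\<omega>. \<omega> \<in> space M \<Longrightarrow> 0 \<le> g \<omega>"
    and g_cond: "AE \<omega> in M. nn_cond_exp M F (\<lambda>\<omega>. ennreal (g \<omega>)) \<omega> \<le> ennreal B"
    and Z: "Z \<in> borel_measurable M" "\<And>\<omega>. \<omega> \<in> space M \<Longrightarrow> 0 \<le> Z \<omega> \<and> Z \<omega> \<le> K * g \<omega>"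
    and K: "0 \<le> K" and B: "0 \<le> B"
  shows "integrable M (\<lambda>\<omega>. f \<omega> * Z \<omega>)"
    and "(\<integral>\<omega>. f \<omega> * Z \<omega> \<partial>M) \<le> K * B * (\<integral>\<omega>. f \<omega> \<partial>M)"
proof -
  have fM [measurable]: "f \<in> borel_measurable M" using f(1) by (rule measurable_from_subalg[OF subalg])
  have [measurable]: "g \<in> borel_measurable M" "Z \<in> borel_measurable M" using g Z by auto
  have f_int_nn: "0 \<le> (\<integral>\<omega>. f \<omega> \<partial>M)" using f by (intro integral_nonneg_AE) (simp add: AE_I2)
  have fZ_nn: "\<And>\<omega>. \<omega> \<in> space M \<Longrightarrow> 0 \<le> f \<omega> * Z \<omega>" using f Z by simp
  have "(\<lambda>\<omega>. ennreal (f \<omega>)) \<in> borel_measurable F" using f(1) by measurable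
  from nn_integral_mult_le_of_nn_cond_exp_le[OF this _ g_cond]
  have "(\<integral>\<^sup>+\<omega>. ennreal (f \<omega>) * ennreal (g \<omega>) \<partial>M) \<le> ennreal B * (\<integral>\<^sup>+\<omega>. ennreal (f \<omega>) \<partial>M)"
    by measurable
  also have "(\<integral>\<^sup>+\<omega>. ennreal (f \<omega>) \<partial>M) = ennreal (\<integral>\<omega>. f \<omega> \<partial>M)"
    using f by (intro nn_integral_eq_integral) (auto intro!: AE_I2)
  finally have cond: "(\<integral>\<^sup>+\<omega>. ennreal (f \<omega>) * ennreal (g \<omega>) \<partial>M) \<le> ennreal B * ennreal (\<integral>\<omega>. f \<omega> \<partial>M)" .
  have "(\<integral>\<^sup>+\<omega>. ennreal (f \<omega> * Z \<omega>) \<partial>M) \<le> (\<integral>\<^sup>+\<omega>. ennreal K * (ennreal (f \<omega>) * ennreal (g \<omega>)) \<partial>M)"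
  proof (rule nn_integral_mono)
    fix \<omega> assume w: "\<omega> \<in> space M"
    have "f \<omega> * Z \<omega> \<le> K * (f \<omega> * g \<omega>)"
      using f(3)[OF w] Z(2)[OF w] mult_left_mono[of "Z \<omega>" "K * g \<omega>" "f \<omega>"] by (simp add: mult_ac)
    thus "ennreal (f \<omega> * Z \<omega>) \<le> ennreal K * (ennreal (f \<omega>) * ennreal (g \<omega>))"
      using f(3)[OF w] g(2)[OF w] K by (simp add: ennreal_mult[symmetric] ennreal_leI)
  qed
  also have "\<dots> = ennreal K * (\<integral>\<^sup>+\<omega>. ennreal (f \<omega>) * ennreal (g \<omega>) \<partial>M)"
    by (intro nn_integral_cmult) measurable
  also have "\<dots> \<le> ennreal K * (ennreal B * ennreal (\<integral>\<omega>. f \<omega> \<partial>M))"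
    using cond by (rule mult_left_mono) simp
  also have "\<dots> = ennreal (K * B * (\<integral>\<omega>. f \<omega> \<partial>M))"
    using K B f_int_nn by (simp add: ennreal_mult mult.assoc)
  finally have nn_bound: "(\<integral>\<^sup>+\<omega>. ennreal (f \<omega> * Z \<omega>) \<partial>M) \<le> ennreal (K * B * (\<integral>\<omega>. f \<omega> \<partial>M))" .
  show int: "integrable M (\<lambda>\<omega>. f \<omega> * Z \<omega>)"
  proof (rule integrableI_bounded)
    have "(\<integral>\<^sup>+\<omega>. ennreal (norm (f \<omega> * Z \<omega>)) \<partial>M) = (\<integral>\<^sup>+\<omega>. ennreal (f \<omega> * Z \<omega>) \<partial>M)"
      using fZ_nn by (intro nn_integral_cong) simp
    also have "\<dots> < \<infinity>" using nn_bound by (simp add: le_less_trans)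
    finally show "(\<integral>\<^sup>+\<omega>. ennreal (norm (f \<omega> * Z \<omega>)) \<partial>M) < \<infinity>" .
  qed measurable
  have "ennreal (\<integral>\<omega>. f \<omega> * Z \<omega> \<partial>M) \<le> ennreal (K * B * (\<integral>\<omega>. f \<omega> \<partial>M))"
    using nn_bound int fZ_nn by (subst nn_integral_eq_integral[symmetric]) (auto intro!: AE_I2)
  thus "(\<integral>\<omega>. f \<omega> * Z \<omega> \<partial>M) \<le> K * B * (\<integral>\<omega>. f \<omega> \<partial>M)"
    using K B f_int_nn by (simp add: ennreal_le_iff)
qed

section \<open>From exponential moments to rates\<close>

lemma (in prob_space) tail_le_of_exp_moment_le:
  fixes Y :: "'a \<Rightarrow> real"
  assumes Y: "Y \<in> borel_measurable M" and int: "integrable M (\<lambda>\<omega>. exp (s * Y \<omega>))"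
    and s: "0 \<le> s" and moment: "(\<integral>\<omega>. exp (s * Y \<omega>) \<partial>M) \<le> C"
  shows "measure M {\<omega>\<in>space M. z \<le> Y \<omega>} \<le> C * exp (- s * z)"
proof -
  have "measure M {\<omega>\<in>space M. z \<le> Y \<omega>} \<le> measure M {\<omega>\<in>space M. exp (s * z) \<le> exp (s * Y \<omega>)}"
    using s Y by (intro finite_measure_mono) (auto intro: mult_left_mono)
  also have "\<dots> \<le> (\<integral>\<omega>. exp (s * Y \<omega>) \<partial>M) / exp (s * z)"
    by (rule integral_Markov_inequality_measure[OF int sets.top]) auto
  also have "\<dots> \<le> C / exp (s * z)" using moment by (simp add: divide_right_mono)
  finally show ?thesis by (simp add: exp_minus field_simps)
qed

lemma (in prob_space) mean_le_of_exp_moment_le: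
  fixes Y :: "'a \<Rightarrow> real"
  assumes Y: "integrable M Y" and int: "integrable M (\<lambda>\<omega>. exp (s * Y \<omega>))"
    and moment: "(\<integral>\<omega>. exp (s * Y \<omega>) \<partial>M) \<le> C"
  shows "s * (\<integral>\<omega>. Y \<omega> \<partial>M) \<le> C"
proof -
  have "(\<integral>\<omega>. s * Y \<omega> \<partial>M) \<le> (\<integral>\<omega>. exp (s * Y \<omega>) \<partial>M)"
  proof (rule integral_mono)
    show "s * Y \<omega> \<le> exp (s * Y \<omega>)" for \<omega> using exp_ge_add_one_self[of "s * Y \<omega>"] by linarith
  qed (use Y int in auto)
  thus ?thesis using moment by simp
qed

lemma lipschitz_suboptimality_le_infdist:
  fixes X :: "'a::euclidean_space set"
  assumes lip: "L-lipschitz_on X l" and y: "y \<in> X" and compact: "compact X"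
  shows "l y - (INF z\<in>X. l z) \<le> L * infdist y (argmin_set X l)"
proof -
  obtain x0 where x0: "x0 \<in> X" "\<forall>z\<in>X. l x0 \<le> l z"
    using continuous_attains_inf[OF compact _ lipschitz_on_continuous_on[OF lip]] y by blast
  have closed: "closed (argmin_set X l)"
  proof -
    have "argmin_set X l = X \<inter> l -` {..l x0}"
      using x0 by (auto simp: argmin_set_def intro: order_trans)
    thus ?thesis using compact
      by (simp add: continuous_closed_preimage[OF lipschitz_on_continuous_on[OF lip]] compact_imp_closed)
  qed
  have "x0 \<in> argmin_set X l" using x0 by (simp add: argmin_set_def)
  then obtain k where k: "k \<in> argmin_set X l" "infdist y (argmin_set X l) = dist y k"
    using infdist_attains_inf[OF closed] by blast
  have kX: "k \<in> X" and kmin: "\<And>z. z \<in> X \<Longrightarrow> l k \<le> l z" using k(1) by (auto simp: argmin_set_def)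
  have "(INF z\<in>X. l z) = l k" by (rule cInf_eq_minimum) (use kX kmin in auto)
  moreover have "l y - l k \<le> L * dist y k"
    using lipschitz_onD[OF lip y kX] by (simp add: dist_real_def)
  ultimately show ?thesis using k(2) by simp
qed

section \<open>Projected stochastic gradient descent\<close>

locale psgd = prob_space M for M :: "'w measure" +
  fixes X :: "'a::euclidean_space set" and l :: "'a \<Rightarrow> real" and grad :: "'a \<Rightarrow> 'a"
    and F :: "nat \<Rightarrow> 'w measure" and x c :: "nat \<Rightarrow> 'w \<Rightarrow> 'a"
    and a u \<gamma> \<kappa> lam B Cl :: real
  assumes X_ne: "X \<noteq> {}" and X_closed: "closed X" and X_bounded: "bounded X"
      and X_convex: "convex X"
      and lip: "Cl-lipschitz_on X l"
      and filt: "is_filtration M F"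
      and x0_meas: "x 0 \<in> borel_measurable (F 0)"
      and x0_in: "\<forall>\<omega>\<in>space M. x 0 \<omega> \<in> X"
      and c_meas: "\<forall>t. c t \<in> borel_measurable (F (Suc t))"
      and c_cond: "\<forall>t. cond_exp_eq M (F t) (c t) (\<lambda>\<omega>. grad (x t \<omega>))"
      and step: "\<forall>t. \<forall>\<omega>\<in>space M.
                   x (Suc t) \<omega> = closest_point X (x t \<omega> - (a / (u + real t) powr \<gamma>) *\<^sub>R c t \<omega>)"
      and a_pos: "a > 0" and u_pos: "u > 0" and \<gamma>_ge: "0 \<le> \<gamma>" and \<gamma>_le: "\<gamma> \<le> 1"
      and \<kappa>_pos: "\<kappa> > 0"
      and D1: "\<forall>y\<in>X. \<forall>ys\<in>argmin_set X l.
                 dist y ys = infdist y (argmin_set X l) \<longrightarrow>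
                 grad y \<bullet> (y - ys) \<ge> \<kappa> * norm (y - ys)"
      and lam_pos: "lam > 0" and B_ge_1: "B \<ge> 1"
      and D2: "\<forall>t. AE \<omega> in M.
                 nn_cond_exp M (F t) (\<lambda>\<omega>. ennreal (exp (lam * norm (c t \<omega>)))) \<omega> \<le> ennreal B"
begin

lemma subalgebra_F: "subalgebra M (F t)"
  using filt by (simp add: is_filtration_def)

lemma space_F [simp]: "space (F t) = space M"
  using subalgebra_F[of t] by (simp add: subalgebra_def)

lemma sigma_finite_subalgebra_F: "sigma_finite_subalgebra M (F t)"
  by (rule finite_measure_subalgebra_is_sigma_finite)
     (simp add: finite_measure_subalgebra_def finite_measure_subalgebra_axioms_def subalgebra_F
       finite_measure_axioms)

lemma measurable_F_mono: "f \<in> borel_measurable (F s) \<Longrightarrow> s \<le> t \<Longrightarrow> f \<in> borel_measurable (F t)"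
proof -
  assume "f \<in> borel_measurable (F s)" "s \<le> t"
  moreover have "sets (F s) \<subseteq> sets (F t)" using filt \<open>s \<le> t\<close> by (simp add: is_filtration_def)
  ultimately show ?thesis by (auto simp: measurable_def)
qed

lemma measurable_F_M: "f \<in> borel_measurable (F s) \<Longrightarrow> f \<in> borel_measurable M"
  by (rule measurable_from_subalg[OF subalgebra_F])

lemma integrable_F_bounded:
  fixes f :: "'w \<Rightarrow> real"
  shows "f \<in> borel_measurable (F s) \<Longrightarrow> (\<And>\<omega>. \<omega> \<in> space M \<Longrightarrow> \<bar>f \<omega>\<bar> \<le> C) \<Longrightarrow> integrable M f"
  by (rule integrable_const_bound[where B=C]) (auto intro!: AE_I2 simp: measurable_F_M)

definition \<alpha> :: "nat \<Rightarrow> real" where "\<alpha> t = a / (u + real t) powr \<gamma>"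

lemma \<alpha>_pos: "\<alpha> t > 0"
  using a_pos u_pos by (simp add: \<alpha>_def)

lemma x_Suc: "\<omega> \<in> space M \<Longrightarrow> x (Suc t) \<omega> = closest_point X (x t \<omega> - \<alpha> t *\<^sub>R c t \<omega>)"
  using step by (simp add: \<alpha>_def)

lemma x_in_X: "\<omega> \<in> space M \<Longrightarrow> x t \<omega> \<in> X"
  by (induction t) (simp_all add: x0_in x_Suc closest_point_in_set[OF X_closed X_ne])

lemma x_measurable: "x t \<in> borel_measurable (F t)"
proof (induction t)
  case 0 then show ?case using x0_meas by simp
next
  case (Suc t)
  have m1: "x t \<in> borel_measurable (F (Suc t))" using measurable_F_mono[OF Suc] by simp
  have m2: "c t \<in> borel_measurable (F (Suc t))" using c_meas by simp
  have "(\<lambda>\<omega>. closest_point X (x t \<omega> - \<alpha> t *\<^sub>R c t \<omega>)) \<in> borel_measurable (F (Suc t))"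
    by (rule borel_measurable_continuous_on[OF continuous_on_closest_point[OF X_convex X_closed X_ne]])
       (use m1 m2 in measurable)
  moreover have "\<And>\<omega>. \<omega> \<in> space (F (Suc t)) \<Longrightarrow> x (Suc t) \<omega> = closest_point X (x t \<omega> - \<alpha> t *\<^sub>R c t \<omega>)"
    using x_Suc by simp
  ultimately show ?case by (subst measurable_cong) auto
qed

lemma c_measurable_M: "c t \<in> borel_measurable M"
  using c_meas measurable_F_M by blast

lemma c_integrable: "integrable M (c t)"
  using c_cond by (simp add: cond_exp_eq_def)

definition Xopt :: "'a set" where "Xopt = argmin_set X l"

lemma X_compact: "compact X" using X_closed X_bounded by (simp add: compact_eq_bounded_closed)

lemma Xopt_subset: "Xopt \<subseteq> X" by (auto simp: Xopt_def argmin_set_def)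

lemma Xopt_nonempty_closed: "Xopt \<noteq> {}" "closed Xopt"
proof -
  obtain x0 where x0: "x0 \<in> X" "\<forall>y\<in>X. l x0 \<le> l y"
    using continuous_attains_inf[OF X_compact X_ne lipschitz_on_continuous_on[OF lip]] by blast
  thus "Xopt \<noteq> {}" by (auto simp: Xopt_def argmin_set_def)
  have "Xopt = X \<inter> l -` {..l x0}"
    using x0 by (auto simp: Xopt_def argmin_set_def intro: order_trans)
  thus "closed Xopt"
    by (simp add: continuous_closed_preimage[OF lipschitz_on_continuous_on[OF lip] X_closed])
qed

definition diam :: "real" where "diam = diameter X"

lemma diam_nonneg: "0 \<le> diam"
  using X_ne diameter_bounded_bound[OF X_bounded] by (auto simp: diam_def intro: order_trans[OF zero_le_dist])

lemma infdist_Xopt_le_diam: "y \<in> X \<Longrightarrow> infdist y Xopt \<le> diam"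
proof -
  assume y: "y \<in> X"
  obtain k where "k \<in> Xopt" using Xopt_nonempty_closed by blast
  hence "infdist y Xopt \<le> dist y k" by (rule infdist_le)
  also have "\<dots> \<le> diam" using \<open>k \<in> Xopt\<close> Xopt_subset y diameter_bounded_bound[OF X_bounded]
    by (auto simp: diam_def)
  finally show ?thesis .
qed

definition d :: "nat \<Rightarrow> 'w \<Rightarrow> real" where "d t \<omega> = infdist (x t \<omega>) Xopt"

lemma d_measurable: "d t \<in> borel_measurable (F t)"
  unfolding d_def by (rule borel_measurable_continuous_on[OF _ x_measurable]) (intro continuous_intros)

lemma d_bounds: "\<omega> \<in> space M \<Longrightarrow> 0 \<le> d t \<omega> \<and> d t \<omega> \<le> diam"
  using infdist_Xopt_le_diam[OF x_in_X] by (simp add: d_def infdist_nonneg)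

text \<open>The projection is 1-Lipschitz and fixes \<open>X\<close>, so one step moves \<open>x\<close> (and hence \<open>d\<close>)
  by at most \<open>\<alpha> t * norm (c t \<omega>)\<close>, and moves it no further from any optimal point than the unprojected step.\<close>
lemma d_Suc_diff_le: "\<omega> \<in> space M \<Longrightarrow> \<bar>d (Suc t) \<omega> - d t \<omega>\<bar> \<le> \<alpha> t * norm (c t \<omega>)"
proof -
  assume w: "\<omega> \<in> space M"
  have "\<bar>d (Suc t) \<omega> - d t \<omega>\<bar> \<le> dist (x (Suc t) \<omega>) (x t \<omega>)"
    unfolding d_def by (rule infdist_triangle_abs)
  also have "x t \<omega> = closest_point X (x t \<omega>)" using x_in_X[OF w] by (simp add: closest_point_self)
  also have "dist (x (Suc t) \<omega>) (closest_point X (x t \<omega>)) \<le> dist (x t \<omega> - \<alpha> t *\<^sub>R c t \<omega>) (x t \<omega>)"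
    unfolding x_Suc[OF w] by (rule closest_point_lipschitz[OF X_convex X_closed X_ne])
  also have "\<dots> = \<alpha> t * norm (c t \<omega>)" using \<alpha>_pos[of t] by (simp add: dist_norm)
  finally show ?thesis .
qed

lemma d_Suc_le: "\<omega> \<in> space M \<Longrightarrow> q \<in> Xopt \<Longrightarrow> d (Suc t) \<omega> \<le> norm (x t \<omega> - \<alpha> t *\<^sub>R c t \<omega> - q)"
proof -
  assume w: "\<omega> \<in> space M" and q: "q \<in> Xopt"
  have "d (Suc t) \<omega> \<le> dist (x (Suc t) \<omega>) q" unfolding d_def using q by (rule infdist_le)
  also have "q = closest_point X q" using q Xopt_subset by (auto simp: closest_point_self)
  also have "dist (x (Suc t) \<omega>) (closest_point X q) \<le> dist (x t \<omega> - \<alpha> t *\<^sub>R c t \<omega>) q"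
    unfolding x_Suc[OF w]
    using closest_point_lipschitz[OF X_convex X_closed X_ne, of "x t \<omega> - \<alpha> t *\<^sub>R c t \<omega>" q]
      q Xopt_subset by (auto simp: closest_point_self)
  finally show ?thesis by (simp add: dist_norm)
qed

definition G :: "nat \<Rightarrow> 'w \<Rightarrow> 'a" where "G t = vec_cond_exp M (F t) (c t)"

lemma G_measurable: "G t \<in> borel_measurable (F t)"
  by (simp add: G_def)

lemma AE_G_eq_grad: "AE \<omega> in M. G t \<omega> = grad (x t \<omega>)"
  unfolding G_def by (rule AE_vec_cond_exp_eq) (use c_cond in blast)

lemma exp_moment_measurable: "(\<lambda>\<omega>. exp (lam * norm (c t \<omega>))) \<in> borel_measurable M"
  using c_measurable_M[of t] by measurable

lemma integral_mult_le_exp_moment: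
  assumes f: "f \<in> borel_measurable (F t)" "\<And>\<omega>. \<omega> \<in> space M \<Longrightarrow> 0 \<le> f \<omega> \<and> f \<omega> \<le> Cf"
    and Z: "Z \<in> borel_measurable M"
      "\<And>\<omega>. \<omega> \<in> space M \<Longrightarrow> 0 \<le> Z \<omega> \<and> Z \<omega> \<le> K * exp (lam * norm (c t \<omega>))"
    and K: "0 \<le> K"
  shows "integrable M (\<lambda>\<omega>. f \<omega> * Z \<omega>)" "(\<integral>\<omega>. f \<omega> * Z \<omega> \<partial>M) \<le> K * B * (\<integral>\<omega>. f \<omega> \<partial>M)"
proof -
  have "integrable M f" using f by (intro integrable_F_bounded[where C = Cf]) auto
  note * = sigma_finite_subalgebra.integral_mult_le_of_nn_cond_exp_le[OF sigma_finite_subalgebra_F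
      f(1) this _ exp_moment_measurable _ D2[rule_format] Z K]
  have "\<And>\<omega>. \<omega> \<in> space M \<Longrightarrow> 0 \<le> f \<omega>" using f(2) by blast
  moreover have "0 \<le> B" using B_ge_1 by simp
  ultimately show "integrable M (\<lambda>\<omega>. f \<omega> * Z \<omega>)" "(\<integral>\<omega>. f \<omega> * Z \<omega> \<partial>M) \<le> K * B * (\<integral>\<omega>. f \<omega> \<partial>M)"
    using * by simp_all
qed

lemma exp_moment_integrable: "integrable M (\<lambda>\<omega>. exp (lam * norm (c t \<omega>)))"
  and exp_moment_le: "(\<integral>\<omega>. exp (lam * norm (c t \<omega>)) \<partial>M) \<le> B"
  using integral_mult_le_exp_moment[of "\<lambda>_. 1" t 1 "\<lambda>\<omega>. exp (lam * norm (c t \<omega>))" 1]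
    exp_moment_measurable by (auto simp: prob_space)

text \<open>
  The constants below are tuned so that, in the drift of the Lyapunov function, each error term
  (step-size curvature, second moment of the noise, slack of the near-projection) costs at most a
  fixed fraction of the decrease \<open>\<kappa>/2\<close> granted by (D1).
\<close>

definition m2 :: "real" where "m2 = 8 * B / lam^2"
definition c0 :: "real" where "c0 = a * \<kappa> / 8"
definition E0 :: "real" where "E0 = exp (diam / c0)"
definition A1 :: "real" where "A1 = E0 + E0 * diam / (2 * c0)"
definition r0 :: "real" where "r0 = 4 * m2 / \<kappa>"
definition ratio_bound :: "real" where "ratio_bound = 1 + 1 / min u 1"
definition \<eta> :: "real" where "\<eta> = min (lam / (2 * ratio_bound * A1)) (\<kappa> / (8 * ratio_bound * A1^2 * m2))"
definition \<delta>0 :: "real" where "\<delta>0 = \<kappa> / 32"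
definition \<rho> :: "real" where "\<rho> = exp (- (3 * \<eta> * \<kappa> / 32))"
definition drift_const :: "real" where "drift_const = exp (E0 * \<eta> * ratio_bound * r0) * B"

definition \<theta> :: "nat \<Rightarrow> real" where "\<theta> s = \<eta> * (u + real s) powr \<gamma> / a"

definition \<beta> :: "nat \<Rightarrow> real" where "\<beta> s = \<theta> (Suc s) * \<alpha> s"

definition lyap :: "nat \<Rightarrow> 'w \<Rightarrow> real" where "lyap s \<omega> = exp (\<theta> s * exp_potential c0 (d s \<omega>))"

lemma m2_pos: "m2 > 0" using lam_pos B_ge_1 by (simp add: m2_def)
lemma c0_pos: "c0 > 0" using a_pos \<kappa>_pos by (simp add: c0_def)
lemma E0_ge_1: "E0 \<ge> 1" using diam_nonneg c0_pos by (simp add: E0_def)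
lemma A1_ge_E0: "A1 \<ge> E0" using diam_nonneg c0_pos E0_ge_1 by (simp add: A1_def)
lemma r0_pos: "r0 > 0" using m2_pos \<kappa>_pos by (simp add: r0_def)
lemma ratio_bound_ge_1: "ratio_bound \<ge> 1" using u_pos by (simp add: ratio_bound_def)
lemma \<eta>_pos: "\<eta> > 0"
  using lam_pos \<kappa>_pos ratio_bound_ge_1 A1_ge_E0 E0_ge_1 m2_pos by (simp add: \<eta>_def)
lemma \<delta>0_pos: "\<delta>0 > 0" using \<kappa>_pos by (simp add: \<delta>0_def)
lemma \<rho>_pos_lt_1: "0 < \<rho>" "\<rho> < 1" using \<eta>_pos \<kappa>_pos by (simp_all add: \<rho>_def)
lemma drift_const_pos: "drift_const > 0" using B_ge_1 by (simp add: drift_const_def)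
lemma m2_div_r0: "m2 / (2 * r0) = \<kappa> / 8" using m2_pos \<kappa>_pos by (simp add: r0_def field_simps)

lemma \<eta>_A1_le: "\<eta> * ratio_bound * A1 \<le> lam / 2"
proof -
  have "\<eta> * (ratio_bound * A1) \<le> lam / (2 * ratio_bound * A1) * (ratio_bound * A1)"
    using ratio_bound_ge_1 A1_ge_E0 E0_ge_1 by (intro mult_right_mono) (auto simp: \<eta>_def)
  thus ?thesis using ratio_bound_ge_1 A1_ge_E0 E0_ge_1 by (simp add: field_simps)
qed

lemma \<eta>_A1_sq_le: "\<eta> * ratio_bound * A1^2 * m2 / 2 \<le> \<kappa> / 16"
proof -
  have "\<eta> * (ratio_bound * A1^2 * m2) \<le> \<kappa> / (8 * ratio_bound * A1^2 * m2) * (ratio_bound * A1^2 * m2)"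
    using ratio_bound_ge_1 A1_ge_E0 E0_ge_1 m2_pos by (intro mult_right_mono) (auto simp: \<eta>_def)
  thus ?thesis using ratio_bound_ge_1 A1_ge_E0 E0_ge_1 m2_pos by (simp add: field_simps)
qed

lemma \<eta>_E0_le: "E0 * \<eta> * ratio_bound \<le> lam"
proof -
  have "E0 * \<eta> * ratio_bound \<le> A1 * \<eta> * ratio_bound"
    using A1_ge_E0 \<eta>_pos ratio_bound_ge_1 by (intro mult_right_mono) auto
  thus ?thesis using \<eta>_A1_le lam_pos by (simp add: mult_ac)
qed

lemma base_pos: "u + real s > 0" using u_pos by simp

lemma base_powr_ge: "(u + real s) powr \<gamma> \<ge> min u 1"
proof (cases "u + real s \<ge> 1")
  case True
  hence "1 \<le> (u + real s) powr \<gamma>" using \<gamma>_ge by (simp add: ge_one_powr_ge_zero)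
  thus ?thesis by simp
next
  case False
  hence "(u + real s) powr 1 \<le> (u + real s) powr \<gamma>" using \<gamma>_le base_pos[of s]
    by (intro powr_mono') auto
  thus ?thesis using base_pos[of s] by simp
qed

text \<open>The exponent \<open>\<theta>\<close> grows like the inverse step size, so \<open>\<beta> s\<close> stays in a fixed band.\<close>
lemma \<beta>_bounds: "\<eta> \<le> \<beta> s" "\<beta> s \<le> \<eta> * ratio_bound"
proof -
  have \<beta>: "\<beta> s = \<eta> * ((u + real s + 1) powr \<gamma> / (u + real s) powr \<gamma>)"
    using a_pos base_pos[of s] by (simp add: \<beta>_def \<theta>_def \<alpha>_def ac_simps)
  have p: "(u + real s) powr \<gamma> > 0" using base_pos[of s] by simp
  have "(u + real s) powr \<gamma> \<le> (u + real s + 1) powr \<gamma>" using \<gamma>_ge base_pos[of s] by (intro powr_mono2) auto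
  hence "1 \<le> (u + real s + 1) powr \<gamma> / (u + real s) powr \<gamma>" using p by simp
  hence "\<eta> * 1 \<le> \<eta> * ((u + real s + 1) powr \<gamma> / (u + real s) powr \<gamma>)"
    using \<eta>_pos by (intro mult_left_mono) auto
  thus "\<eta> \<le> \<beta> s" by (simp only: \<beta> mult_1_right)
  have "(u + real s + 1) powr \<gamma> \<le> (u + real s) powr \<gamma> + 1"
    using powr_add_one_le[of "u + real s" \<gamma>] base_pos[of s] \<gamma>_ge \<gamma>_le by simp
  hence "(u + real s + 1) powr \<gamma> / (u + real s) powr \<gamma> \<le> 1 + 1 / (u + real s) powr \<gamma>"
    using p by (simp add: field_simps)
  also have "1 / (u + real s) powr \<gamma> \<le> 1 / min u 1"
    using base_powr_ge[of s] u_pos by (intro divide_left_mono) auto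
  finally have "(u + real s + 1) powr \<gamma> / (u + real s) powr \<gamma> \<le> ratio_bound" by (simp add: ratio_bound_def)
  hence "\<eta> * ((u + real s + 1) powr \<gamma> / (u + real s) powr \<gamma>) \<le> \<eta> * ratio_bound"
    using \<eta>_pos by (intro mult_left_mono) auto
  thus "\<beta> s \<le> \<eta> * ratio_bound" by (simp only: \<beta>)
qed

lemma \<beta>_pos: "\<beta> s > 0" using \<beta>_bounds(1) \<eta>_pos by (rule less_le_trans[rotated])

lemma \<theta>_Suc_diff_le: "\<theta> (Suc s) - \<theta> s \<le> \<eta> / a"
proof -
  have "(u + real s + 1) powr \<gamma> \<le> (u + real s) powr \<gamma> + 1"
    using powr_add_one_le[of "u + real s" \<gamma>] base_pos[of s] \<gamma>_ge \<gamma>_le by simp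
  hence "\<eta> * (u + real s + 1) powr \<gamma> \<le> \<eta> * ((u + real s) powr \<gamma> + 1)"
    using \<eta>_pos by (intro mult_left_mono) auto
  hence le: "\<eta> * (u + real s + 1) powr \<gamma> - \<eta> * (u + real s) powr \<gamma> \<le> \<eta>" by (simp add: algebra_simps)
  have "\<theta> (Suc s) - \<theta> s = (\<eta> * (u + real s + 1) powr \<gamma> - \<eta> * (u + real s) powr \<gamma>) / a"
    by (simp add: \<theta>_def diff_divide_distrib ac_simps)
  thus ?thesis using le a_pos by (simp add: divide_right_mono)
qed

lemma \<theta>_pos: "\<theta> s > 0" using \<eta>_pos a_pos base_pos[of s] by (simp add: \<theta>_def)

lemma \<theta>_mono: "s \<le> t \<Longrightarrow> \<theta> s \<le> \<theta> t"
proof -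
  assume "s \<le> t"
  hence "(u + real s) powr \<gamma> \<le> (u + real t) powr \<gamma>" using \<gamma>_ge base_pos[of s] by (intro powr_mono2) auto
  hence "\<eta> * (u + real s) powr \<gamma> \<le> \<eta> * (u + real t) powr \<gamma>" using \<eta>_pos by (intro mult_left_mono) auto
  thus ?thesis using a_pos by (simp add: \<theta>_def divide_right_mono)
qed

text \<open>Only for decaying step sizes (\<open>\<gamma> > 0\<close>) does the curvature term \<open>\<alpha> s * E0 * m2 / (2 * c0)\<close>
  eventually drop below the threshold; this is the only place where \<open>\<gamma> > 0\<close> is used.\<close>
lemma eventually_curvature_small:
  assumes "\<gamma> > 0"
  shows "\<exists>S0. \<forall>s\<ge>S0. \<alpha> s * E0 * m2 / (2 * c0) \<le> \<kappa> / 16"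
proof -
  define Z where "Z = 8 * E0 * m2 * a / (c0 * \<kappa>)"
  have Z: "Z > 0" using E0_ge_1 m2_pos a_pos c0_pos \<kappa>_pos by (simp add: Z_def)
  have "\<alpha> s * E0 * m2 / (2 * c0) \<le> \<kappa> / 16" if s: "nat \<lceil>Z powr (1 / \<gamma>)\<rceil> \<le> s" for s
  proof -
    have "Z powr (1 / \<gamma>) \<le> u + real s" using s u_pos by linarith
    hence "(Z powr (1 / \<gamma>)) powr \<gamma> \<le> (u + real s) powr \<gamma>" using assms by (intro powr_mono2) auto
    hence Z_le: "Z \<le> (u + real s) powr \<gamma>" using assms Z by (simp add: powr_powr)
    hence "\<alpha> s \<le> a / Z" unfolding \<alpha>_def using Z a_pos by (intro divide_left_mono mult_pos_pos) auto
    hence "\<alpha> s * (E0 * m2 / (2 * c0)) \<le> a / Z * (E0 * m2 / (2 * c0))"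
      using E0_ge_1 m2_pos c0_pos by (intro mult_right_mono) auto
    also have "\<dots> = \<kappa> / 16" using Z E0_ge_1 m2_pos c0_pos \<kappa>_pos a_pos by (simp add: Z_def field_simps)
    finally show ?thesis by (simp add: mult_ac)
  qed
  thus ?thesis by blast
qed

lemma lyap_measurable: "lyap s \<in> borel_measurable (F s)"
  unfolding lyap_def exp_potential_def using d_measurable[of s] by measurable

lemma lyap_bounds:
  assumes "\<omega> \<in> space M"
  shows "0 < lyap s \<omega> \<and> lyap s \<omega> \<le> exp (\<theta> s * exp_potential c0 diam)"
proof -
  have "exp_potential c0 (d s \<omega>) \<le> exp_potential c0 diam"
    using d_bounds[OF assms] by (intro exp_potential_mono c0_pos) auto
  thus ?thesis using \<theta>_pos[of s] by (simp add: lyap_def mult_left_mono)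
qed

lemma lyap_integrable: "integrable M (lyap s)"
  using lyap_bounds by (intro integrable_F_bounded[OF lyap_measurable]) (auto simp: less_imp_le)

text \<open>
  The exact projection onto \<open>Xopt\<close> need not be measurable, so the drift argument uses an \<open>F s\<close>-measurable
  anchor instead: the first point of a countable dense subset of \<open>Xopt\<close> that is almost as close as the
  projection and satisfies (D1) for the conditional mean gradient up to a small slack.
\<close>

definition opt_dense :: "'a set" where "opt_dense = (SOME T. countable T \<and> T \<subseteq> Xopt \<and> Xopt \<subseteq> closure T)"

lemma opt_dense: "countable opt_dense" "opt_dense \<subseteq> Xopt" "Xopt \<subseteq> closure opt_dense"
proof -
  obtain T where "countable T" "T \<subseteq> Xopt" "Xopt \<subseteq> closure T" by (rule separable)
  hence "\<exists>T. countable T \<and> T \<subseteq> Xopt \<and> Xopt \<subseteq> closure T" by blast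
  hence "countable opt_dense \<and> opt_dense \<subseteq> Xopt \<and> Xopt \<subseteq> closure opt_dense"
    unfolding opt_dense_def by (rule someI_ex)
  thus "countable opt_dense" "opt_dense \<subseteq> Xopt" "Xopt \<subseteq> closure opt_dense" by auto
qed

lemma opt_dense_nonempty: "opt_dense \<noteq> {}"
  using opt_dense(3) Xopt_nonempty_closed by auto

definition good_anchor :: "nat \<Rightarrow> 'w \<Rightarrow> nat \<Rightarrow> bool" where
  "good_anchor s \<omega> k \<longleftrightarrow> (let q = from_nat_into opt_dense k in
     dist (x s \<omega>) q < d s \<omega> + \<alpha> s * \<delta>0 \<and>
     \<kappa> * dist (x s \<omega>) q - \<kappa> * (\<alpha> s * r0) / 2 < G s \<omega> \<bullet> (x s \<omega> - q))"

definition anchor :: "nat \<Rightarrow> 'w \<Rightarrow> 'a" where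
  "anchor s \<omega> = from_nat_into opt_dense (LEAST k. good_anchor s \<omega> k)"

lemma good_anchor_measurable: "Measurable.pred (F s) (\<lambda>\<omega>. good_anchor s \<omega> k)"
  unfolding good_anchor_def Let_def using x_measurable[of s] d_measurable[of s] G_measurable[of s]
  by measurable

lemma anchor_measurable: "anchor s \<in> borel_measurable (F s)"
proof -
  have "(\<lambda>\<omega>. LEAST k. good_anchor s \<omega> k) \<in> measurable (F s) (count_space UNIV)"
    by (rule measurable_Least) (rule good_anchor_measurable)
  thus ?thesis unfolding anchor_def by (rule measurable_compose) simp
qed

lemma anchor_in_Xopt: "anchor s \<omega> \<in> Xopt"
  using from_nat_into[OF opt_dense_nonempty] opt_dense(2) by (auto simp: anchor_def)

lemma anchor_good:
  assumes "\<exists>k. good_anchor s \<omega> k"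
  shows "dist (x s \<omega>) (anchor s \<omega>) < d s \<omega> + \<alpha> s * \<delta>0"
    and "\<kappa> * dist (x s \<omega>) (anchor s \<omega>) - \<kappa> * (\<alpha> s * r0) / 2 < G s \<omega> \<bullet> (x s \<omega> - anchor s \<omega>)"
  using LeastI_ex[OF assms] by (simp_all add: good_anchor_def anchor_def Let_def)

text \<open>Where \<open>G\<close> is the true gradient, the projection satisfies (D1) with strict slack; the
  admissible anchors form an open set around it, which therefore meets the dense set.\<close>
lemma good_anchor_exists:
  assumes w: "\<omega> \<in> space M" and G: "G s \<omega> = grad (x s \<omega>)"
  shows "\<exists>k. good_anchor s \<omega> k"
proof -
  define y where "y = x s \<omega>"
  have y: "y \<in> X" using x_in_X[OF w] by (simp add: y_def)
  obtain p where p: "p \<in> Xopt" "infdist y Xopt = dist y p"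
    using infdist_attains_inf[OF Xopt_nonempty_closed(2,1)] by blast
  have D1p: "grad y \<bullet> (y - p) \<ge> \<kappa> * norm (y - p)"
    using D1 y p by (auto simp: Xopt_def)
  define U where "U = {z. dist y z < d s \<omega> + \<alpha> s * \<delta>0 \<and> \<kappa> * dist y z - \<kappa> * (\<alpha> s * r0) / 2 < G s \<omega> \<bullet> (y - z)}"
  have "open U" unfolding U_def by (intro open_Collect_conj open_Collect_less continuous_intros)
  moreover have "p \<in> U"
  proof -
    have "0 < \<kappa> * (\<alpha> s * r0) / 2" using \<kappa>_pos \<alpha>_pos[of s] r0_pos by simp
    thus ?thesis using p \<alpha>_pos[of s] \<delta>0_pos D1p G by (simp add: U_def d_def y_def dist_norm)
  qed
  moreover have "p \<in> closure opt_dense" using p opt_dense(3) by auto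
  ultimately obtain z where z: "z \<in> opt_dense" "z \<in> U"
    using closure_iff_nhds_not_empty[of p opt_dense] by blast
  obtain k where "from_nat_into opt_dense k = z" using from_nat_into_surj[OF opt_dense(1) z(1)] by blast
  hence "good_anchor s \<omega> k" using z(2) by (simp add: U_def good_anchor_def y_def)
  thus ?thesis by blast
qed

lemma AE_good_anchor_exists: "AE \<omega> in M. \<exists>k. good_anchor s \<omega> k"
  using AE_G_eq_grad[of s] by (rule AE_mp) (auto intro!: AE_I2 good_anchor_exists)

definition slope :: "nat \<Rightarrow> 'w \<Rightarrow> real" where "slope s \<omega> = exp (d s \<omega> / c0)"

definition far :: "nat \<Rightarrow> 'w set" where
  "far s = {\<omega> \<in> space M. \<alpha> s * r0 \<le> d s \<omega> \<and> (\<exists>k. good_anchor s \<omega> k)}"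

definition weight :: "nat \<Rightarrow> 'w \<Rightarrow> real" where
  "weight s \<omega> = indicator (far s) \<omega> * exp (\<theta> (Suc s) * exp_potential c0 (d s \<omega>) + \<beta> s * slope s \<omega> * \<delta>0)"

definition step_factor :: "nat \<Rightarrow> 'w \<Rightarrow> real" where
  "step_factor s \<omega> = 1 - \<beta> s * slope s \<omega> * (sgn (x s \<omega> - anchor s \<omega>) \<bullet> c s \<omega>)
     + \<beta> s * slope s \<omega> / (2 * r0) * (norm (c s \<omega>))^2 + \<beta> s * E0 * \<alpha> s / (2 * c0) * (norm (c s \<omega>))^2
     + (\<beta> s)^2 * A1^2 / 2 * (norm (c s \<omega>))^2 * exp (\<beta> s * A1 * norm (c s \<omega>))"

definition mean_factor :: "nat \<Rightarrow> 'w \<Rightarrow> real" where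
  "mean_factor s \<omega> = 1 - \<beta> s * slope s \<omega> * \<kappa> / 2
     + m2 * \<beta> s * (slope s \<omega> / (2 * r0) + E0 * \<alpha> s / (2 * c0)) + m2 * (\<beta> s)^2 * A1^2 / 2"

lemma slope_measurable: "slope s \<in> borel_measurable (F s)"
  unfolding slope_def using d_measurable[of s] by measurable

lemma slope_bounds: "\<omega> \<in> space M \<Longrightarrow> 1 \<le> slope s \<omega> \<and> slope s \<omega> \<le> E0"
  using d_bounds[of \<omega> s] c0_pos by (simp add: slope_def E0_def divide_right_mono)

lemma far_sets: "far s \<in> sets (F s)"
proof -
  have "far s = {\<omega> \<in> space (F s). \<alpha> s * r0 \<le> d s \<omega> \<and> (\<exists>k. good_anchor s \<omega> k)}" by (simp add: far_def)
  also have "\<dots> \<in> sets (F s)" using d_measurable[of s] good_anchor_measurable by measurable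
  finally show ?thesis .
qed

lemma weight_measurable: "weight s \<in> borel_measurable (F s)"
  unfolding weight_def exp_potential_def using far_sets[of s] d_measurable[of s] slope_measurable[of s]
  by measurable

lemma weight_bounds:
  assumes w: "\<omega> \<in> space M"
  shows "0 \<le> weight s \<omega> \<and> weight s \<omega> \<le> exp (\<theta> (Suc s) * exp_potential c0 diam + \<beta> s * E0 * \<delta>0)"
proof -
  have "exp_potential c0 (d s \<omega>) \<le> exp_potential c0 diam"
    using d_bounds[OF w] by (intro exp_potential_mono c0_pos) auto
  hence "\<theta> (Suc s) * exp_potential c0 (d s \<omega>) \<le> \<theta> (Suc s) * exp_potential c0 diam"
    using \<theta>_pos by (intro mult_left_mono) (auto simp: less_imp_le)
  moreover have "\<beta> s * slope s \<omega> * \<delta>0 \<le> \<beta> s * E0 * \<delta>0"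
    using slope_bounds[OF w] \<beta>_pos[of s] \<delta>0_pos by (intro mult_right_mono mult_left_mono) (auto simp: less_imp_le)
  ultimately show ?thesis by (auto simp: weight_def indicator_def)
qed

text \<open>Near the optimal set the potential is linear with slope \<open>E0\<close>, so the exponent grows by at
  most \<open>E0 * \<beta> s * (r0 + norm (c s \<omega>))\<close>, which the exponential moment (D2) absorbs; far from it the
  one-step expansion of the potential applies around the anchor.\<close>
lemma lyap_Suc_le:
  assumes w: "\<omega> \<in> space M" and good: "\<exists>k. good_anchor s \<omega> k"
  shows "lyap (Suc s) \<omega> \<le> weight s \<omega> * step_factor s \<omega> + exp (E0 * \<beta> s * r0) * exp (lam * norm (c s \<omega>))"
proof (cases "\<alpha> s * r0 \<le> d s \<omega>")
  case True
  have "lyap (Suc s) \<omega> \<le> exp (\<theta> (Suc s) * exp_potential c0 (d s \<omega>) + \<beta> s * slope s \<omega> * \<delta>0) * step_factor s \<omega>"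
    unfolding lyap_def slope_def step_factor_def \<beta>_def
  proof (rule exp_potential_step[OF \<alpha>_pos \<theta>_pos c0_pos r0_pos less_imp_le[OF \<delta>0_pos]])
    show "d (Suc s) \<omega> \<le> norm (x s \<omega> - \<alpha> s *\<^sub>R c s \<omega> - anchor s \<omega>)"
      using d_Suc_le[OF w anchor_in_Xopt] .
    show "d s \<omega> \<le> norm (x s \<omega> - anchor s \<omega>)"
      using infdist_le[OF anchor_in_Xopt, of "x s \<omega>"] by (simp add: d_def dist_norm)
    show "norm (x s \<omega> - anchor s \<omega>) < d s \<omega> + \<alpha> s * \<delta>0"
      using anchor_good(1)[OF good] by (simp add: dist_norm)
    show "0 \<le> d (Suc s) \<omega>" "d (Suc s) \<omega> \<le> diam" "0 \<le> d s \<omega>" "d s \<omega> \<le> diam" using d_bounds[OF w] by auto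
  qed (use True d_Suc_diff_le[OF w] in \<open>simp_all add: E0_def A1_def\<close>)
  moreover have "\<omega> \<in> far s" using w good True by (simp add: far_def)
  ultimately show ?thesis by (simp add: weight_def add_increasing2)
next
  case False
  have d_Suc: "d (Suc s) \<omega> \<le> \<alpha> s * r0 + \<alpha> s * norm (c s \<omega>)"
    using d_Suc_diff_le[OF w, of s] False by (simp add: abs_le_iff)
  have "\<theta> (Suc s) * exp_potential c0 (d (Suc s) \<omega>) \<le> \<theta> (Suc s) * (E0 * d (Suc s) \<omega>)"
    using exp_potential_le_linear[OF c0_pos] d_bounds[OF w, of "Suc s"] \<theta>_pos
    by (intro mult_left_mono) (auto simp: E0_def less_imp_le)
  also have "\<dots> \<le> \<theta> (Suc s) * (E0 * (\<alpha> s * r0 + \<alpha> s * norm (c s \<omega>)))"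
    using d_Suc \<theta>_pos E0_ge_1 by (intro mult_left_mono) (auto simp: less_imp_le)
  also have "\<dots> = E0 * \<beta> s * r0 + (E0 * \<beta> s) * norm (c s \<omega>)" by (simp add: \<beta>_def algebra_simps)
  also have "(E0 * \<beta> s) * norm (c s \<omega>) \<le> lam * norm (c s \<omega>)"
  proof -
    have "E0 * \<beta> s \<le> E0 * (\<eta> * ratio_bound)" using \<beta>_bounds(2) E0_ge_1 by (intro mult_left_mono) auto
    thus ?thesis using \<eta>_E0_le by (intro mult_right_mono) (auto simp: mult_ac)
  qed
  finally have "lyap (Suc s) \<omega> \<le> exp (E0 * \<beta> s * r0) * exp (lam * norm (c s \<omega>))"
    by (simp add: lyap_def flip: exp_add)
  moreover have "weight s \<omega> = 0" using False by (simp add: weight_def far_def)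
  ultimately show ?thesis by simp
qed

text \<open>On \<open>far s\<close> the anchor lies at distance at least \<open>\<alpha> s * r0\<close>, so the slack \<open>\<kappa> * \<alpha> s * r0 / 2\<close> in
  the choice of the anchor costs at most half of the (D1) inequality.\<close>
lemma far_dir_inner_G_ge:
  assumes "\<omega> \<in> far s"
  shows "\<kappa> / 2 \<le> sgn (x s \<omega> - anchor s \<omega>) \<bullet> G s \<omega>"
proof -
  have far: "\<alpha> s * r0 \<le> d s \<omega>" and good: "\<exists>k. good_anchor s \<omega> k" using assms by (auto simp: far_def)
  define r where "r = norm (x s \<omega> - anchor s \<omega>)"
  have "d s \<omega> \<le> r" using infdist_le[OF anchor_in_Xopt, of "x s \<omega>" s \<omega>] by (simp add: d_def dist_norm r_def)
  moreover have "0 < \<alpha> s * r0" using \<alpha>_pos r0_pos by simp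
  ultimately have r: "r > 0" "\<alpha> s * r0 \<le> r" using far by auto
  have "\<kappa> * r - \<kappa> * (\<alpha> s * r0) / 2 < G s \<omega> \<bullet> (x s \<omega> - anchor s \<omega>)"
    using anchor_good(2)[OF good] by (simp add: dist_norm r_def)
  moreover have "\<kappa> * (\<alpha> s * r0) / 2 \<le> \<kappa> * r / 2" using r \<kappa>_pos by simp
  ultimately have "\<kappa> / 2 * r \<le> G s \<omega> \<bullet> (x s \<omega> - anchor s \<omega>)" by simp
  hence "\<kappa> / 2 \<le> (G s \<omega> \<bullet> (x s \<omega> - anchor s \<omega>)) / r" using r by (simp add: field_simps)
  also have "\<dots> = sgn (x s \<omega> - anchor s \<omega>) \<bullet> G s \<omega>"
    by (simp add: sgn_div_norm r_def inner_commute divide_inverse_commute)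
  finally show ?thesis .
qed

lemma integral_mult_sq_exp_moment_le:
  assumes f: "f \<in> borel_measurable (F s)" "\<And>\<omega>. \<omega> \<in> space M \<Longrightarrow> 0 \<le> f \<omega> \<and> f \<omega> \<le> Cf"
    and \<mu>: "0 \<le> \<mu>" "\<mu> \<le> lam / 2"
  shows "integrable M (\<lambda>\<omega>. f \<omega> * ((norm (c s \<omega>))^2 * exp (\<mu> * norm (c s \<omega>))))"
    and "(\<integral>\<omega>. f \<omega> * ((norm (c s \<omega>))^2 * exp (\<mu> * norm (c s \<omega>))) \<partial>M) \<le> m2 * (\<integral>\<omega>. f \<omega> \<partial>M)"
proof -
  have Z: "(\<lambda>\<omega>. (norm (c s \<omega>))^2 * exp (\<mu> * norm (c s \<omega>))) \<in> borel_measurable M"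
    using c_measurable_M[of s] by measurable
  have "0 \<le> (norm (c s \<omega>))^2 * exp (\<mu> * norm (c s \<omega>))
      \<and> (norm (c s \<omega>))^2 * exp (\<mu> * norm (c s \<omega>)) \<le> 8 / lam^2 * exp (lam * norm (c s \<omega>))" for \<omega>
    using sq_mult_exp_le[OF lam_pos _ \<mu>] by simp
  from integral_mult_le_exp_moment[OF f Z this]
  show "integrable M (\<lambda>\<omega>. f \<omega> * ((norm (c s \<omega>))^2 * exp (\<mu> * norm (c s \<omega>))))"
    and "(\<integral>\<omega>. f \<omega> * ((norm (c s \<omega>))^2 * exp (\<mu> * norm (c s \<omega>))) \<partial>M) \<le> m2 * (\<integral>\<omega>. f \<omega> \<partial>M)"
    by (simp_all add: m2_def)
qed

text \<open>Conditioning on \<open>F s\<close> replaces the noise by the mean gradient in the linear term, where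
  (D1) yields the decrease.\<close>
lemma integral_weight_drift_ge:
  shows "integrable M (\<lambda>\<omega>. weight s \<omega> * slope s \<omega> * (sgn (x s \<omega> - anchor s \<omega>) \<bullet> c s \<omega>))"
    and "\<kappa> / 2 * (\<integral>\<omega>. weight s \<omega> * slope s \<omega> \<partial>M)
      \<le> (\<integral>\<omega>. weight s \<omega> * slope s \<omega> * (sgn (x s \<omega> - anchor s \<omega>) \<bullet> c s \<omega>) \<partial>M)"
proof -
  define f where "f \<omega> = weight s \<omega> * slope s \<omega>" for \<omega>
  define dir where "dir \<omega> = sgn (x s \<omega> - anchor s \<omega>)" for \<omega>
  note [measurable] = weight_measurable[of s] slope_measurable[of s] x_measurable[of s] anchor_measurable[of s]
  have f_meas: "f \<in> borel_measurable (F s)" unfolding f_def by measurable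
  have dir_meas: "dir \<in> borel_measurable (F s)" unfolding dir_def sgn_div_norm by measurable
  define W where "W = exp (\<theta> (Suc s) * exp_potential c0 diam + \<beta> s * E0 * \<delta>0) * E0"
  have f_bounds: "0 \<le> f \<omega> \<and> \<bar>f \<omega>\<bar> \<le> W" if w: "\<omega> \<in> space M" for \<omega>
    using weight_bounds[OF w] slope_bounds[OF w, of s] by (auto simp: f_def W_def intro: mult_mono)
  have dir_bound: "norm (dir \<omega>) \<le> 1" for \<omega> by (simp add: dir_def norm_sgn)
  note I = sigma_finite_subalgebra.integral_mult_inner_vec_cond_exp[OF sigma_finite_subalgebra_F
      c_integrable[of s] f_meas conjunct2[OF f_bounds] dir_meas dir_bound, folded G_def]
  show "integrable M (\<lambda>\<omega>. weight s \<omega> * slope s \<omega> * (sgn (x s \<omega> - anchor s \<omega>) \<bullet> c s \<omega>))"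
    using I(1) by (simp add: f_def dir_def)
  have "(\<integral>\<omega>. \<kappa> / 2 * f \<omega> \<partial>M) \<le> (\<integral>\<omega>. f \<omega> * (dir \<omega> \<bullet> G s \<omega>) \<partial>M)"
  proof (rule integral_mono)
    show "integrable M (\<lambda>\<omega>. \<kappa> / 2 * f \<omega>)"
      using f_bounds by (intro integrable_mult_right integrable_F_bounded[OF f_meas, where C = W]) blast
    show "integrable M (\<lambda>\<omega>. f \<omega> * (dir \<omega> \<bullet> G s \<omega>))" by (rule I(2))
    fix \<omega> assume w: "\<omega> \<in> space M"
    show "\<kappa> / 2 * f \<omega> \<le> f \<omega> * (dir \<omega> \<bullet> G s \<omega>)"
    proof (cases "\<omega> \<in> far s")
      case True
      hence "\<kappa> / 2 \<le> dir \<omega> \<bullet> G s \<omega>" using far_dir_inner_G_ge by (simp add: dir_def)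
      from mult_left_mono[OF this conjunct1[OF f_bounds[OF w]]] show ?thesis by (simp add: mult.commute)
    qed (simp add: f_def weight_def)
  qed
  thus "\<kappa> / 2 * (\<integral>\<omega>. weight s \<omega> * slope s \<omega> \<partial>M)
      \<le> (\<integral>\<omega>. weight s \<omega> * slope s \<omega> * (sgn (x s \<omega> - anchor s \<omega>) \<bullet> c s \<omega>) \<partial>M)"
    using I(3) by (simp add: f_def dir_def)
qed

text \<open>The quadratic terms are bounded by the second moment \<open>m2\<close> of the noise, from (D2).\<close>
lemma integral_weight_step_factor_le:
  shows "integrable M (\<lambda>\<omega>. weight s \<omega> * step_factor s \<omega>)"
    and "integrable M (\<lambda>\<omega>. weight s \<omega> * mean_factor s \<omega>)"
    and "(\<integral>\<omega>. weight s \<omega> * step_factor s \<omega> \<partial>M) \<le> (\<integral>\<omega>. weight s \<omega> * mean_factor s \<omega> \<partial>M)"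
proof -
  define W where "W = exp (\<theta> (Suc s) * exp_potential c0 diam + \<beta> s * E0 * \<delta>0)"
  define k2 where "k2 = \<beta> s * E0 / (2 * r0) + \<beta> s * E0 * \<alpha> s / (2 * c0)"
  define f2 where "f2 \<omega> = weight s \<omega> * (\<beta> s * slope s \<omega> / (2 * r0) + \<beta> s * E0 * \<alpha> s / (2 * c0))" for \<omega>
  define k3 where "k3 = (\<beta> s)^2 * A1^2 / 2"
  note [measurable] = weight_measurable[of s] slope_measurable[of s]
  have weight: "0 \<le> weight s \<omega> \<and> weight s \<omega> \<le> W" if "\<omega> \<in> space M" for \<omega>
    using weight_bounds[OF that] by (simp add: W_def)
  have f2_meas: "f2 \<in> borel_measurable (F s)" unfolding f2_def by measurable
  have f2_bound: "0 \<le> f2 \<omega> \<and> f2 \<omega> \<le> W * k2" if w: "\<omega> \<in> space M" for \<omega>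
    using weight[OF w] slope_bounds[OF w, of s] \<beta>_pos[of s] r0_pos \<alpha>_pos[of s] c0_pos E0_ge_1
    unfolding f2_def k2_def
    by (auto intro!: mult_mono add_mono add_nonneg_nonneg mult_nonneg_nonneg divide_nonneg_pos divide_right_mono)
  have f3_meas: "(\<lambda>\<omega>. weight s \<omega> * k3) \<in> borel_measurable (F s)" by measurable
  have f3_bound: "0 \<le> weight s \<omega> * k3 \<and> weight s \<omega> * k3 \<le> W * k3" if "\<omega> \<in> space M" for \<omega>
    using weight[OF that] by (auto simp: k3_def intro: mult_right_mono)
  have "\<beta> s * A1 \<le> \<eta> * ratio_bound * A1" using \<beta>_bounds(2) A1_ge_E0 E0_ge_1 by (intro mult_right_mono) auto
  hence "\<beta> s * A1 \<le> lam / 2" using \<eta>_A1_le by linarith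
  moreover have "0 \<le> \<beta> s * A1" using \<beta>_pos[of s] A1_ge_E0 E0_ge_1 by simp
  ultimately have \<mu>: "0 \<le> \<beta> s * A1" "\<beta> s * A1 \<le> lam / 2" by simp_all
  note I1 = integral_weight_drift_ge[of s]
  have "(0::real) \<le> lam / 2" using lam_pos by simp
  note I2 = integral_mult_sq_exp_moment_le[OF f2_meas f2_bound order_refl this, simplified]
  note I3 = integral_mult_sq_exp_moment_le[OF f3_meas f3_bound \<mu>]
  have int_weight: "integrable M (weight s)"
    using weight by (intro integrable_F_bounded[OF weight_measurable, where C = W]) auto
  have "\<bar>weight s \<omega> * slope s \<omega>\<bar> \<le> W * E0" if w: "\<omega> \<in> space M" for \<omega>
  proof -
    have "1 \<le> slope s \<omega>" "slope s \<omega> \<le> E0" using slope_bounds[OF w] by auto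
    moreover have "weight s \<omega> * slope s \<omega> \<le> W * E0" using weight[OF w] calculation by (intro mult_mono) auto
    ultimately show ?thesis using weight[OF w] by simp
  qed
  hence int_slope: "integrable M (\<lambda>\<omega>. weight s \<omega> * slope s \<omega>)"
    by (intro integrable_F_bounded[where s = s]) measurable
  have int_f2: "integrable M f2" using f2_bound by (intro integrable_F_bounded[OF f2_meas, where C = "W * k2"]) auto
  let ?n = "\<lambda>\<omega>. norm (c s \<omega>)" and ?dir = "\<lambda>\<omega>. sgn (x s \<omega> - anchor s \<omega>) \<bullet> c s \<omega>"
  have step_split: "weight s \<omega> * step_factor s \<omega> = weight s \<omega> - \<beta> s * (weight s \<omega> * slope s \<omega> * ?dir \<omega>)
      + f2 \<omega> * (?n \<omega>)^2 + weight s \<omega> * k3 * ((?n \<omega>)^2 * exp (\<beta> s * A1 * ?n \<omega>))" for \<omega>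
    by (simp add: step_factor_def f2_def k3_def algebra_simps)
  have mean_split: "weight s \<omega> * mean_factor s \<omega> = weight s \<omega> - \<beta> s * (\<kappa> / 2 * (weight s \<omega> * slope s \<omega>))
      + m2 * f2 \<omega> + m2 * (weight s \<omega> * k3)" for \<omega>
    by (simp add: mean_factor_def f2_def k3_def algebra_simps)
  show "integrable M (\<lambda>\<omega>. weight s \<omega> * step_factor s \<omega>)"
    unfolding step_split using int_weight I1(1) I2(1) I3(1) by (auto simp: mult.assoc)
  show int_mean: "integrable M (\<lambda>\<omega>. weight s \<omega> * mean_factor s \<omega>)"
    unfolding mean_split using int_weight int_slope int_f2 by auto
  have "(\<integral>\<omega>. weight s \<omega> * step_factor s \<omega> \<partial>M) = (\<integral>\<omega>. weight s \<omega> \<partial>M)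
      - \<beta> s * (\<integral>\<omega>. weight s \<omega> * slope s \<omega> * ?dir \<omega> \<partial>M) + (\<integral>\<omega>. f2 \<omega> * (?n \<omega>)^2 \<partial>M)
      + (\<integral>\<omega>. weight s \<omega> * k3 * ((?n \<omega>)^2 * exp (\<beta> s * A1 * ?n \<omega>)) \<partial>M)"
    unfolding step_split using int_weight I1(1) I2(1) I3(1) by simp
  also have "\<dots> \<le> (\<integral>\<omega>. weight s \<omega> \<partial>M) - \<beta> s * (\<kappa> / 2 * (\<integral>\<omega>. weight s \<omega> * slope s \<omega> \<partial>M))
      + m2 * (\<integral>\<omega>. f2 \<omega> \<partial>M) + m2 * (\<integral>\<omega>. weight s \<omega> * k3 \<partial>M)"
    using mult_left_mono[OF I1(2), of "\<beta> s"] \<beta>_pos[of s] I2(2) I3(2) by linarith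
  also have "\<dots> = (\<integral>\<omega>. weight s \<omega> * mean_factor s \<omega> \<partial>M)"
    unfolding mean_split using int_weight int_slope int_f2 by simp
  finally show "(\<integral>\<omega>. weight s \<omega> * step_factor s \<omega> \<partial>M) \<le> (\<integral>\<omega>. weight s \<omega> * mean_factor s \<omega> \<partial>M)" .
qed

text \<open>Once the curvature term is small, every error term in \<open>mean_factor\<close> is a fraction of the
  decrease \<open>\<beta> s * slope s \<omega> * \<kappa> / 2\<close>.\<close>
lemma mean_factor_le:
  assumes small: "\<alpha> s * E0 * m2 / (2 * c0) \<le> \<kappa> / 16" and w: "\<omega> \<in> space M"
  shows "mean_factor s \<omega> \<le> 1 - \<beta> s * slope s \<omega> * \<kappa> / 4"
proof -
  define b where "b = \<beta> s * slope s \<omega>"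
  have "\<beta> s * 1 \<le> \<beta> s * slope s \<omega>" using \<beta>_pos[of s] slope_bounds[OF w] by (intro mult_left_mono) auto
  hence \<beta>_le: "\<beta> s * (\<kappa> / 16) \<le> b * (\<kappa> / 16)" using \<kappa>_pos by (intro mult_right_mono) (auto simp: b_def)
  have t1: "m2 * \<beta> s * (slope s \<omega> / (2 * r0)) = b * \<kappa> / 8"
    using m2_div_r0 r0_pos by (simp add: b_def field_simps)
  have "m2 * \<beta> s * (E0 * \<alpha> s / (2 * c0)) = \<beta> s * (\<alpha> s * E0 * m2 / (2 * c0))" by (simp add: field_simps)
  also have "\<dots> \<le> \<beta> s * (\<kappa> / 16)" using small \<beta>_pos[of s] by (intro mult_left_mono) auto
  finally have t2: "m2 * \<beta> s * (E0 * \<alpha> s / (2 * c0)) \<le> b * (\<kappa> / 16)" using \<beta>_le by linarith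
  have "\<beta> s * A1^2 * m2 / 2 \<le> \<eta> * ratio_bound * A1^2 * m2 / 2"
    using \<beta>_bounds(2) m2_pos by (intro divide_right_mono mult_right_mono) auto
  hence "\<beta> s * A1^2 * m2 / 2 \<le> \<kappa> / 16" using \<eta>_A1_sq_le by linarith
  hence "\<beta> s * (\<beta> s * A1^2 * m2 / 2) \<le> \<beta> s * (\<kappa> / 16)" using \<beta>_pos[of s] by (intro mult_left_mono) auto
  hence t3: "m2 * (\<beta> s)^2 * A1^2 / 2 \<le> b * (\<kappa> / 16)" using \<beta>_le by (simp add: power2_eq_square field_simps)
  have "mean_factor s \<omega> = 1 - b * \<kappa> / 2 + m2 * \<beta> s * (slope s \<omega> / (2 * r0))
      + m2 * \<beta> s * (E0 * \<alpha> s / (2 * c0)) + m2 * (\<beta> s)^2 * A1^2 / 2"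
    by (simp add: mean_factor_def b_def algebra_simps)
  hence "mean_factor s \<omega> \<le> 1 - b * \<kappa> / 4" using t1 t2 t3 by linarith
  thus ?thesis by (simp add: b_def)
qed

text \<open>What survives of the decrease pays for the growth \<open>\<theta> (Suc s) - \<theta> s \<le> \<eta> / a\<close> of the exponent
  (the potential is at most \<open>c0 * slope\<close> and \<open>c0 = a \<kappa> / 8\<close>) and for the slack \<open>\<delta>0\<close>,
  with \<open>3 \<eta> \<kappa> / 32\<close> to spare.\<close>
lemma lyap_exponent_contraction:
  assumes w: "\<omega> \<in> space M"
  shows "\<theta> (Suc s) * exp_potential c0 (d s \<omega>) + \<beta> s * slope s \<omega> * \<delta>0 - \<beta> s * slope s \<omega> * \<kappa> / 4
    \<le> \<theta> s * exp_potential c0 (d s \<omega>) - 3 * \<eta> * \<kappa> / 32"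
proof -
  define b where "b = \<beta> s * slope s \<omega>"
  have slope: "1 \<le> slope s \<omega>" using slope_bounds[OF w] by simp
  have d0: "0 \<le> d s \<omega>" using d_bounds[OF w] by simp
  have "(\<theta> (Suc s) - \<theta> s) * exp_potential c0 (d s \<omega>) \<le> \<eta> / a * exp_potential c0 (d s \<omega>)"
    using \<theta>_Suc_diff_le[of s] exp_potential_ge[OF c0_pos d0] d0 by (intro mult_right_mono) auto
  hence "\<theta> (Suc s) * exp_potential c0 (d s \<omega>) \<le> \<theta> s * exp_potential c0 (d s \<omega>) + \<eta> / a * exp_potential c0 (d s \<omega>)"
    by (simp add: algebra_simps)
  moreover have "\<eta> / a * exp_potential c0 (d s \<omega>) \<le> \<eta> / a * (c0 * slope s \<omega>)"
    using exp_potential_le_exp[OF c0_pos] \<eta>_pos a_pos by (intro mult_left_mono) (auto simp: slope_def)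
  moreover have "\<eta> / a * (c0 * slope s \<omega>) = \<eta> * slope s \<omega> * \<kappa> / 8" using a_pos by (simp add: c0_def)
  moreover have "\<eta> * slope s \<omega> \<le> b" using \<beta>_bounds(1)[of s] slope by (simp add: b_def mult_right_mono)
  moreover have "\<eta> * \<kappa> \<le> \<eta> * slope s \<omega> * \<kappa>"
    using slope \<eta>_pos \<kappa>_pos mult_right_mono[of 1 "slope s \<omega>" "\<eta> * \<kappa>"] by (simp add: mult_ac)
  moreover have "\<eta> * slope s \<omega> * \<kappa> \<le> b * \<kappa>" using calculation(4) \<kappa>_pos by (intro mult_right_mono) auto
  moreover have "\<beta> s * slope s \<omega> * \<delta>0 = b * \<kappa> / 32" by (simp add: b_def \<delta>0_def)
  moreover have "\<beta> s * slope s \<omega> * \<kappa> = b * \<kappa>" by (simp add: b_def)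
  ultimately show ?thesis by linarith
qed

lemma weight_mean_factor_le:
  assumes small: "\<alpha> s * E0 * m2 / (2 * c0) \<le> \<kappa> / 16" and w: "\<omega> \<in> space M"
  shows "weight s \<omega> * mean_factor s \<omega> \<le> \<rho> * lyap s \<omega>"
proof -
  have "mean_factor s \<omega> \<le> exp (- (\<beta> s * slope s \<omega> * \<kappa> / 4))"
    using mean_factor_le[OF small w] exp_ge_add_one_self[of "- (\<beta> s * slope s \<omega> * \<kappa> / 4)"] by simp
  hence "weight s \<omega> * mean_factor s \<omega> \<le> weight s \<omega> * exp (- (\<beta> s * slope s \<omega> * \<kappa> / 4))"
    using weight_bounds[OF w] by (intro mult_left_mono) auto
  also have "\<dots> \<le> \<rho> * lyap s \<omega>"
  proof (cases "\<omega> \<in> far s")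
    case True
    have "exp (\<theta> (Suc s) * exp_potential c0 (d s \<omega>) + \<beta> s * slope s \<omega> * \<delta>0) * exp (- (\<beta> s * slope s \<omega> * \<kappa> / 4))
        \<le> exp (\<theta> s * exp_potential c0 (d s \<omega>)) * \<rho>"
      using lyap_exponent_contraction[OF w] by (simp add: \<rho>_def flip: exp_add)
    thus ?thesis using True by (simp add: weight_def lyap_def mult.commute)
  qed (use \<rho>_pos_lt_1 in \<open>simp add: weight_def lyap_def\<close>)
  finally show ?thesis .
qed

lemma lyap_one_step:
  assumes small: "\<alpha> s * E0 * m2 / (2 * c0) \<le> \<kappa> / 16"
  shows "(\<integral>\<omega>. lyap (Suc s) \<omega> \<partial>M) \<le> \<rho> * (\<integral>\<omega>. lyap s \<omega> \<partial>M) + drift_const"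
proof -
  note ints = integral_weight_step_factor_le[of s]
  have "(\<integral>\<omega>. lyap (Suc s) \<omega> \<partial>M)
      \<le> (\<integral>\<omega>. weight s \<omega> * step_factor s \<omega> + exp (E0 * \<beta> s * r0) * exp (lam * norm (c s \<omega>)) \<partial>M)"
  proof (rule integral_mono_AE)
    show "AE \<omega> in M. lyap (Suc s) \<omega>
        \<le> weight s \<omega> * step_factor s \<omega> + exp (E0 * \<beta> s * r0) * exp (lam * norm (c s \<omega>))"
      using AE_good_anchor_exists[of s] by (rule AE_mp) (auto intro!: AE_I2 lyap_Suc_le)
  qed (use lyap_integrable ints(1) exp_moment_integrable[of s] in auto)
  also have "\<dots> = (\<integral>\<omega>. weight s \<omega> * step_factor s \<omega> \<partial>M)
      + exp (E0 * \<beta> s * r0) * (\<integral>\<omega>. exp (lam * norm (c s \<omega>)) \<partial>M)"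
    using ints(1) exp_moment_integrable[of s] by simp
  also have "\<dots> \<le> (\<integral>\<omega>. \<rho> * lyap s \<omega> \<partial>M) + drift_const"
  proof (rule add_mono)
    have "(\<integral>\<omega>. weight s \<omega> * mean_factor s \<omega> \<partial>M) \<le> (\<integral>\<omega>. \<rho> * lyap s \<omega> \<partial>M)"
      by (rule integral_mono[OF ints(2)]) (use lyap_integrable weight_mean_factor_le[OF small] in auto)
    with ints(3) show "(\<integral>\<omega>. weight s \<omega> * step_factor s \<omega> \<partial>M) \<le> (\<integral>\<omega>. \<rho> * lyap s \<omega> \<partial>M)"
      by linarith
    have "E0 * \<beta> s * r0 \<le> E0 * \<eta> * ratio_bound * r0"
      using \<beta>_bounds(2)[of s] E0_ge_1 r0_pos by (simp add: mult_right_mono mult.assoc)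
    thus "exp (E0 * \<beta> s * r0) * (\<integral>\<omega>. exp (lam * norm (c s \<omega>)) \<partial>M) \<le> drift_const"
      using exp_moment_le[of s] B_ge_1 unfolding drift_const_def
      by (intro mult_mono) (auto intro: integral_nonneg_AE)
  qed
  finally show ?thesis by simp
qed

lemma lyap_uniformly_bounded:
  assumes "\<gamma> > 0"
  shows "\<exists>C>0. \<forall>n. (\<integral>\<omega>. lyap n \<omega> \<partial>M) \<le> C"
proof -
  obtain S0 where small: "\<And>s. S0 \<le> s \<Longrightarrow> \<alpha> s * E0 * m2 / (2 * c0) \<le> \<kappa> / 16"
    using eventually_curvature_small[OF assms] by blast
  define C where "C = exp (\<theta> S0 * exp_potential c0 diam) + drift_const / (1 - \<rho>)"
  have stationary: "0 \<le> drift_const / (1 - \<rho>)" using drift_const_pos \<rho>_pos_lt_1 by simp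
  have initial: "(\<integral>\<omega>. lyap n \<omega> \<partial>M) \<le> exp (\<theta> S0 * exp_potential c0 diam)" if "n \<le> S0" for n
  proof -
    have "exp_potential c0 diam \<ge> 0" using exp_potential_ge[OF c0_pos diam_nonneg] diam_nonneg by linarith
    hence "exp (\<theta> n * exp_potential c0 diam) \<le> exp (\<theta> S0 * exp_potential c0 diam)"
      using \<theta>_mono[OF that] by (simp add: mult_right_mono)
    thus ?thesis using lyap_bounds lyap_integrable[of n]
      by (intro integral_le_const AE_I2) (auto intro: order_trans)
  qed
  have "(\<integral>\<omega>. lyap n \<omega> \<partial>M) \<le> C" if "S0 \<le> n" for n
    using that
  proof (induction n rule: dec_induct)
    case base
    thus ?case using initial[of S0] stationary unfolding C_def by linarith
  next
    case (step n)
    have "(\<integral>\<omega>. lyap (Suc n) \<omega> \<partial>M) \<le> \<rho> * (\<integral>\<omega>. lyap n \<omega> \<partial>M) + drift_const"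
      using lyap_one_step small step(1) by blast
    also have "\<dots> \<le> \<rho> * C + drift_const" using step(3) \<rho>_pos_lt_1 by simp
    also have "\<dots> \<le> C"
    proof -
      have "\<rho> * (drift_const / (1 - \<rho>)) + drift_const = drift_const / (1 - \<rho>)"
        using \<rho>_pos_lt_1 by (simp add: field_simps)
      moreover have "\<rho> * exp (\<theta> S0 * exp_potential c0 diam) \<le> exp (\<theta> S0 * exp_potential c0 diam)"
        using \<rho>_pos_lt_1 by simp
      moreover have "\<rho> * C = \<rho> * exp (\<theta> S0 * exp_potential c0 diam) + \<rho> * (drift_const / (1 - \<rho>))"
        by (simp add: C_def distrib_left)
      ultimately show ?thesis using C_def by linarith
    qed
    finally show ?case .
  qed
  moreover have "exp (\<theta> S0 * exp_potential c0 diam) \<le> C" using stationary by (simp add: C_def)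
  ultimately have "\<forall>n. (\<integral>\<omega>. lyap n \<omega> \<partial>M) \<le> C"
    using initial by (metis nat_le_linear order_trans)
  moreover have "C > 0" using stationary by (simp add: C_def add_pos_nonneg)
  ultimately show ?thesis by blast
qed

text \<open>For \<open>\<gamma> = 0\<close> the claim is trivial as \<open>d\<close> is bounded by the diameter; otherwise
  \<open>t^\<gamma> * d (Suc t)\<close> is dominated by the exponent of the Lyapunov function.\<close>
lemma exp_moment_bound:
  "\<exists>I>0. \<exists>C>0. \<forall>t. integrable M (\<lambda>\<omega>. exp (I * rpow (real t) \<gamma> * d (Suc t) \<omega>))
      \<and> (\<integral>\<omega>. exp (I * rpow (real t) \<gamma> * d (Suc t) \<omega>) \<partial>M) \<le> C"
proof -
  have integrable: "integrable M (\<lambda>\<omega>. exp (I * rpow (real t) \<gamma> * d (Suc t) \<omega>))" if "I > 0" for I t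
  proof (rule integrable_F_bounded[where C = "exp (I * rpow (real t) \<gamma> * diam)"])
    show "(\<lambda>\<omega>. exp (I * rpow (real t) \<gamma> * d (Suc t) \<omega>)) \<in> borel_measurable (F (Suc t))"
      using d_measurable[of "Suc t"] by measurable
    show "\<bar>exp (I * rpow (real t) \<gamma> * d (Suc t) \<omega>)\<bar> \<le> exp (I * rpow (real t) \<gamma> * diam)"
      if "\<omega> \<in> space M" for \<omega>
      using d_bounds[OF that, of "Suc t"] that \<open>I > 0\<close> by (simp add: rpow_def mult_left_mono)
  qed
  show ?thesis
  proof (cases "\<gamma> = 0")
    case True
    have bound: "(\<integral>\<omega>. exp (1 * rpow (real t) \<gamma> * d (Suc t) \<omega>) \<partial>M) \<le> exp diam" for t
      using d_bounds True integrable[of 1 t] by (intro integral_le_const AE_I2) (auto simp: rpow_def)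
    show ?thesis
    proof (intro exI conjI)
      show "(1::real) > 0" "exp diam > 0" by simp_all
      show "\<forall>t. integrable M (\<lambda>\<omega>. exp (1 * rpow (real t) \<gamma> * d (Suc t) \<omega>))
          \<and> (\<integral>\<omega>. exp (1 * rpow (real t) \<gamma> * d (Suc t) \<omega>) \<partial>M) \<le> exp diam"
        using integrable[of 1] bound by simp
    qed
  next
    case False
    hence \<gamma>: "\<gamma> > 0" using \<gamma>_ge by simp
    obtain C where C: "C > 0" "\<And>n. (\<integral>\<omega>. lyap n \<omega> \<partial>M) \<le> C" using lyap_uniformly_bounded[OF \<gamma>] by blast
    have I: "\<eta> / a > 0" using \<eta>_pos a_pos by simp
    have "(\<integral>\<omega>. exp (\<eta> / a * rpow (real t) \<gamma> * d (Suc t) \<omega>) \<partial>M) \<le> (\<integral>\<omega>. lyap (Suc t) \<omega> \<partial>M)" for t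
    proof (rule integral_mono[OF integrable[OF I] lyap_integrable])
      fix \<omega> assume w: "\<omega> \<in> space M"
      have d0: "0 \<le> d (Suc t) \<omega>" using d_bounds[OF w] by simp
      have "rpow (real t) \<gamma> \<le> (u + real (Suc t)) powr \<gamma>" using \<gamma> u_pos by (simp add: rpow_def powr_mono2)
      hence "\<eta> / a * rpow (real t) \<gamma> \<le> \<theta> (Suc t)"
        using \<eta>_pos a_pos by (simp add: \<theta>_def divide_right_mono mult_left_mono)
      moreover have "0 \<le> \<eta> / a * rpow (real t) \<gamma>"
        using I by (intro mult_nonneg_nonneg) (auto simp: rpow_def)
      ultimately have "\<eta> / a * rpow (real t) \<gamma> * d (Suc t) \<omega> \<le> \<theta> (Suc t) * exp_potential c0 (d (Suc t) \<omega>)"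
        using exp_potential_ge[OF c0_pos d0] d0 by (intro mult_mono) auto
      thus "exp (\<eta> / a * rpow (real t) \<gamma> * d (Suc t) \<omega>) \<le> lyap (Suc t) \<omega>" by (simp add: lyap_def)
    qed
    hence bound: "(\<integral>\<omega>. exp (\<eta> / a * rpow (real t) \<gamma> * d (Suc t) \<omega>) \<partial>M) \<le> C" for t
      using C(2)[of "Suc t"] by (rule order_trans)
    show ?thesis
    proof (intro exI conjI)
      show "\<forall>t. integrable M (\<lambda>\<omega>. exp (\<eta> / a * rpow (real t) \<gamma> * d (Suc t) \<omega>))
          \<and> (\<integral>\<omega>. exp (\<eta> / a * rpow (real t) \<gamma> * d (Suc t) \<omega>) \<partial>M) \<le> C"
        using integrable[OF I] bound by simp
    qed (use I C in auto)
  qed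
qed

lemma rates_of_exp_moment:
  assumes I: "I > 0" and C: "C > 0"
    and moment: "\<And>t. integrable M (\<lambda>\<omega>. exp (I * rpow (real t) \<gamma> * d (Suc t) \<omega>))"
      "\<And>t. (\<integral>\<omega>. exp (I * rpow (real t) \<gamma> * d (Suc t) \<omega>) \<partial>M) \<le> C"
  shows "measure M {\<omega>\<in>space M. z \<le> d (Suc t) \<omega>} \<le> C * exp (- I * rpow (real t) \<gamma> * z)"
    and "t \<ge> 1 \<Longrightarrow> (\<integral>\<omega>. d (Suc t) \<omega> \<partial>M) \<le> (C / I) / rpow (real t) \<gamma>"
    and "t \<ge> 1 \<Longrightarrow> (\<integral>\<omega>. l (x (Suc t) \<omega>) - (INF y\<in>X. l y) \<partial>M) \<le> ((Cl + 1) * C / I) / rpow (real t) \<gamma>"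
proof -
  have d_meas: "d (Suc t) \<in> borel_measurable M" for t using d_measurable measurable_F_M by blast
  have rpow_nonneg: "0 \<le> rpow (real t) \<gamma>" for t by (simp add: rpow_def)
  show "measure M {\<omega>\<in>space M. z \<le> d (Suc t) \<omega>} \<le> C * exp (- I * rpow (real t) \<gamma> * z)"
    using tail_le_of_exp_moment_le[OF d_meas moment(1) _ moment(2)] I rpow_nonneg[of t] by (simp add: mult.assoc)
  have mean: "(\<integral>\<omega>. d (Suc t) \<omega> \<partial>M) \<le> (C / I) / rpow (real t) \<gamma>" if t: "t \<ge> 1" for t
  proof -
    have "integrable M (d (Suc t))"
      using d_bounds by (intro integrable_F_bounded[OF d_measurable, where C = diam]) auto
    from mean_le_of_exp_moment_le[OF this moment(1)[of t] moment(2)[of t]]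
    have "I * rpow (real t) \<gamma> * (\<integral>\<omega>. d (Suc t) \<omega> \<partial>M) \<le> C" .
    moreover have "0 < rpow (real t) \<gamma>" using t by (simp add: rpow_def)
    ultimately show ?thesis using I by (simp add: field_simps)
  qed
  thus "t \<ge> 1 \<Longrightarrow> (\<integral>\<omega>. d (Suc t) \<omega> \<partial>M) \<le> (C / I) / rpow (real t) \<gamma>" .
  assume t: "t \<ge> 1"
  have Cl: "0 \<le> Cl" using lip by (rule lipschitz_on_nonneg)
  have pos: "0 < (C / I) / rpow (real t) \<gamma>" using t I C by (simp add: rpow_def)
  show "(\<integral>\<omega>. l (x (Suc t) \<omega>) - (INF y\<in>X. l y) \<partial>M) \<le> ((Cl + 1) * C / I) / rpow (real t) \<gamma>"
  proof (cases "integrable M (\<lambda>\<omega>. l (x (Suc t) \<omega>) - (INF y\<in>X. l y))")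
    case True
    have "integrable M (d (Suc t))"
      using d_bounds by (intro integrable_F_bounded[OF d_measurable, where C = diam]) auto
    hence "(\<integral>\<omega>. l (x (Suc t) \<omega>) - (INF y\<in>X. l y) \<partial>M) \<le> (\<integral>\<omega>. Cl * d (Suc t) \<omega> \<partial>M)"
    proof (intro integral_mono True integrable_mult_right)
      fix \<omega> assume "\<omega> \<in> space M"
      thus "l (x (Suc t) \<omega>) - (INF y\<in>X. l y) \<le> Cl * d (Suc t) \<omega>"
        using lipschitz_suboptimality_le_infdist[OF lip x_in_X X_compact] by (simp add: d_def Xopt_def)
    qed
    also have "\<dots> \<le> Cl * ((C / I) / rpow (real t) \<gamma>)"
      using mult_left_mono[OF mean[OF t] Cl] by simp
    also have "\<dots> \<le> (Cl + 1) * ((C / I) / rpow (real t) \<gamma>)" using pos by (intro mult_right_mono) auto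
    finally show ?thesis by simp
  next
    case False
    have "0 \<le> (Cl + 1) * ((C / I) / rpow (real t) \<gamma>)" using Cl pos by (intro mult_nonneg_nonneg) auto
    thus ?thesis using False by (simp add: not_integrable_integral_eq)
  qed
qed

end

theorem theorem2:
  fixes X :: "'a::euclidean_space set"
    and l :: "'a \<Rightarrow> real"
    and grad :: "'a \<Rightarrow> 'a"
    and M :: "'w measure"
    and F :: "nat \<Rightarrow> 'w measure"
    and x c :: "nat \<Rightarrow> 'w \<Rightarrow> 'a"
    and a u \<gamma> :: real
  assumes X_ne: "X \<noteq> {}" and X_closed: "closed X" and X_bounded: "bounded X"
      and X_convex: "convex X"
      and l_lip: "\<exists>C. C-lipschitz_on X l"
      and prob: "prob_space M"
      and filt: "is_filtration M F"
      and x0_meas: "x 0 \<in> borel_measurable (F 0)"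
      and x0_in: "\<forall>\<omega>\<in>space M. x 0 \<omega> \<in> X"
      and c_meas: "\<forall>t. c t \<in> borel_measurable (F (Suc t))"
      and c_cond: "\<forall>t. cond_exp_eq M (F t) (c t) (\<lambda>\<omega>. grad (x t \<omega>))"
      and step: "\<forall>t. \<forall>\<omega>\<in>space M.
                   x (Suc t) \<omega> = closest_point X (x t \<omega> - (a / (u + real t) powr \<gamma>) *\<^sub>R c t \<omega>)"
      and a_pos: "a > 0" and u_pos: "u > 0" and \<gamma>_ge: "0 \<le> \<gamma>" and \<gamma>_le: "\<gamma> \<le> 1"
      and D1: "\<exists>\<kappa>>0. \<forall>y\<in>X. \<forall>ys\<in>argmin_set X l.
                 dist y ys = infdist y (argmin_set X l) \<longrightarrow>
                 grad y \<bullet> (y - ys) \<ge> \<kappa> * norm (y - ys)"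
      and D2: "\<exists>lam>0. \<exists>B::real. \<forall>t. AE \<omega> in M.
                 nn_cond_exp M (F t) (\<lambda>\<omega>. ennreal (exp (lam * norm (c t \<omega>)))) \<omega> \<le> ennreal B"
  shows "\<exists>J I K L. J > 0 \<and> I > 0 \<and> K > 0 \<and> L > 0 \<and>
    (\<forall>t::nat. \<forall>z::real. z \<ge> 0 \<longrightarrow>
       measure M {\<omega>\<in>space M. infdist (x (Suc t) \<omega>) (argmin_set X l) \<ge> z}
         \<le> J * exp (- I * rpow (real t) \<gamma> * z)) \<and>
    (\<forall>t::nat. t \<ge> 1 \<longrightarrow>
       (\<integral>\<omega>. infdist (x (Suc t) \<omega>) (argmin_set X l) \<partial>M) \<le> K / rpow (real t) \<gamma>) \<and>
    (\<forall>t::nat. t \<ge> 1 \<longrightarrow>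
       (\<integral>\<omega>. l (x (Suc t) \<omega>) - (INF y\<in>X. l y) \<partial>M) \<le> L / rpow (real t) \<gamma>)"
proof -
  obtain Cl where Cl: "Cl-lipschitz_on X l" using l_lip by blast
  obtain \<kappa> where \<kappa>: "\<kappa> > 0" "\<forall>y\<in>X. \<forall>ys\<in>argmin_set X l.
      dist y ys = infdist y (argmin_set X l) \<longrightarrow> grad y \<bullet> (y - ys) \<ge> \<kappa> * norm (y - ys)"
    using D1 by blast
  obtain lam B where lam: "lam > 0" and B: "\<forall>t. AE \<omega> in M.
      nn_cond_exp M (F t) (\<lambda>\<omega>. ennreal (exp (lam * norm (c t \<omega>)))) \<omega> \<le> ennreal B"
    using D2 by blast
  have B_max: "\<forall>t. AE \<omega> in M.
      nn_cond_exp M (F t) (\<lambda>\<omega>. ennreal (exp (lam * norm (c t \<omega>)))) \<omega> \<le> ennreal (max B 1)"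
  proof
    fix t
    from B[rule_format, of t]
    show "AE \<omega> in M. nn_cond_exp M (F t) (\<lambda>\<omega>. ennreal (exp (lam * norm (c t \<omega>)))) \<omega> \<le> ennreal (max B 1)"
      by eventually_elim (erule order_trans, simp add: ennreal_leI)
  qed
  interpret psgd M X l grad F x c a u \<gamma> \<kappa> lam "max B 1" Cl
    by (intro psgd.intro psgd_axioms.intro prob)
       (use X_ne X_closed X_bounded X_convex Cl filt x0_meas x0_in c_meas c_cond step a_pos u_pos
          \<gamma>_ge \<gamma>_le \<kappa> lam B_max in auto)
  obtain I C where I: "I > 0" and C: "C > 0"
    and moment: "\<And>t. integrable M (\<lambda>\<omega>. exp (I * rpow (real t) \<gamma> * d (Suc t) \<omega>))"
      "\<And>t. (\<integral>\<omega>. exp (I * rpow (real t) \<gamma> * d (Suc t) \<omega>) \<partial>M) \<le> C"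
    using exp_moment_bound by blast
  have Cl_nonneg: "0 \<le> Cl" using Cl by (rule lipschitz_on_nonneg)
  show ?thesis
    using rates_of_exp_moment[OF I C moment] I C Cl_nonneg
    by (intro exI[of _ C] exI[of _ I] exI[of _ "C / I"] exI[of _ "(Cl + 1) * C / I"])
       (auto simp: d_def Xopt_def add_pos_nonneg)
qed

end
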